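(* Let $\sigma$ be a signature and $\mathcal K$ a nonempty class of causal teams over $\sigma$ (respectively, of generalized causal teams over $\sigma$). The following are equivalent: (i) $\mathcal K$ is causally downward closed and closed under equivalence; (ii) $\mathcal K=\{T:T\models\varphi\}$ for some $\mathcal{CO}_{\sqcup}[\sigma]$-formula $\varphi$; (iii) $\mathcal K=\{T:T\models\varphi\}$ for some $\mathcal{COD}[\sigma]$-formula $\varphi$ (satisfaction being $\models^c$, respectively $\models^g$).
   Context: A signature $\sigma=(\mathrm{Dom},\mathrm{Ran})$: $\mathrm{Dom}$ is a nonempty finite set of variables and each $X\in\mathrm{Dom}$ has a nonempty finite range $\mathrm{Ran}(X)$. For a sequence $\mathbf X=\langle X_1,\dots,X_n\rangle$, $\mathrm{Ran}(\mathbf X)=\prod_i\mathrm{Ran}(X_i)$; $\mathbf X=\mathbf x$ abbreviates $X_1=x_1\wedge\dots\wedge X_n=x_n$; it is inconsistent if it contains $X=x$ and $X=x'$ with $x\ne x'$. Languages: $\mathcal{CO}[\sigma]$: $\alpha::=X=x\mid\neg\alpha\mid\alpha\wedge\alpha\mid\alpha\vee\alpha\mid\mathbf X=\mathbf x\;\Box\!\!\rightarrow\alpha$. $\mathcal{CO}_{\sqcup}[\sigma]$: $\varphi::=X=x\mid\neg\alpha\mid\varphi\wedge\varphi\mid\varphi\vee\varphi\mid\varphi\sqcup\varphi\mid\mathbf X=\mathbf x\;\Box\!\!\rightarrow\varphi$ ($\alpha\in\mathcal{CO}[\sigma]$, $\sqcup$ the global disjunction). $\mathcal{COD}[\sigma]$: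 $\varphi::=X=x\mid{=}(\mathbf X;Y)\mid\neg\alpha\mid\varphi\wedge\varphi\mid\varphi\vee\varphi\mid\mathbf X=\mathbf x\;\Box\!\!\rightarrow\varphi$ ($\alpha\in\mathcal{CO}[\sigma]$). Assignments $s$ on $\mathrm{Dom}$ with $s(X)\in\mathrm{Ran}(X)$ form $\mathbb A_\sigma$. A system of functions $\mathcal F$ assigns to each $V$ in $\mathrm{En}(\mathcal F)\subseteq\mathrm{Dom}$ a parent set $PA^{\mathcal F}_V\subseteq\mathrm{Dom}\setminus\{V\}$ and $\mathcal F_V:\mathrm{Ran}(PA^{\mathcal F}_V)\to\mathrm{Ran}(V)$; $\mathrm{Ex}(\mathcal F)=\mathrm{Dom}\setminus\mathrm{En}(\mathcal F)$; only recursive systems (acyclic parent graph) are considered, forming the finite set $\mathbb F_\sigma$. $s$ is compatible with $\mathcal F$ if $s(V)=\mathcal F_V(s(PA^{\mathcal F}_V))$ for $V\in\mathrm{En}(\mathcal F)$; $\mathbb S_\sigma$ is the set of compatible pairs $(s,\mathcal F)$. For consistent $\mathbf X=\mathbf x$, $\mathcal F_{\mathbf X=\mathbf x}$ restricts $\mathcal F$ to $\mathrm{En}(\mathcal F)\setminus\mathbf X$, and $s^{\mathcal F}_{\mathbf X=\mathbf x}$ is defined recursively: $X_i\mapsto x_i$; $V\mapsto s(V)$ for $V\in\mathrm{Ex}(\mathcal F)\setminus\mathbf X$; $V\mapsto\mathcal F_V(s^{\mathcal F}_{\mathbf X=\mathbf x}(PA^{\mathcal F}_V))$ otherwise. Causal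 team: $T=(T^-,\mathcal F)$, $\mathcal F\in\mathbb F_\sigma$, $T^-$ a set of assignments compatible with $\mathcal F$; all teams with empty team component are identified as $\emptyset$. Causal subteam: $(S^-,\mathcal F)$ with $S^-\subseteq T^-$ (and $\emptyset$). $T_{\mathbf X=\mathbf x}=(\{s^{\mathcal F}_{\mathbf X=\mathbf x}:s\in T^-\},\mathcal F_{\mathbf X=\mathbf x})$. $\models^c$: $T\models X=x$ iff $s(X)=x$ for all $s\in T^-$; $T\models{=}(\mathbf X;Y)$ iff for all $s,s'\in T^-$, $s(\mathbf X)=s'(\mathbf X)$ implies $s(Y)=s'(Y)$; $T\models\neg\alpha$ iff $(\{s\},\mathcal F)\not\models\alpha$ for all $s\in T^-$; $\wedge$ classical; $T\models\varphi\vee\psi$ iff there are causal subteams $T_1,T_2$ with $T_1^-\cup T_2^-=T^-$, $T_1\models\varphi$, $T_2\models\psi$; $T\models\varphi\sqcup\psi$ iff $T\models\varphi$ or $T\models\psi$; $T\models\mathbf X=\mathbf x\;\Box\!\!\rightarrow\varphi$ iff $\mathbf X=\mathbf x$ is inconsistent or $T_{\mathbf X=\mathbf x}\models\varphi$. Generalized causal team: a set $T\subseteq\mathbb S_\sigma$, $T^-=\{s:(s,\mathcal F)\in T\}$, causal subteams are subsets, $T_{\mathbf X=\mathbf x}=\{(s^{\mathcal F}_{\mathbf X=\mathbf x},\mathcal F_{\mathbf X=\mathbf x}):(s,\mathcal F)\in T\}$; $\models^g$ has the same clauses except $T\models\neg\alpha$ iff $\{(s,\mathcal F)\}\not\models\alpha$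 for all $(s,\mathcal F)\in T$, and $T\models\varphi\vee\psi$ iff $T=T_1\cup T_2$ with $T_1\models\varphi$, $T_2\models\psi$. Equivalence: $\mathrm{Cn}(\mathcal F)$ is the set of $V\in\mathrm{En}(\mathcal F)$ with $\mathcal F_V$ constant; $\mathcal F_V\sim\mathcal G_V$ iff $\mathcal F_V(\mathbf x\mathbf y)=\mathcal G_V(\mathbf x\mathbf z)$ for all $\mathbf x\in\mathrm{Ran}(PA^{\mathcal F}_V\cap PA^{\mathcal G}_V)$, $\mathbf y\in\mathrm{Ran}(PA^{\mathcal F}_V\setminus PA^{\mathcal G}_V)$, $\mathbf z\in\mathrm{Ran}(PA^{\mathcal G}_V\setminus PA^{\mathcal F}_V)$; $\mathcal F\sim\mathcal G$ iff $\mathrm{En}(\mathcal F)\setminus\mathrm{Cn}(\mathcal F)=\mathrm{En}(\mathcal G)\setminus\mathrm{Cn}(\mathcal G)$ and $\mathcal F_V\sim\mathcal G_V$ for all $V$ in that set. Nonempty causal teams $(T^-,\mathcal F)\approx(S^-,\mathcal G)$ iff $T^-=S^-$ and $\mathcal F\sim\mathcal G$. For generalized causal teams, $T^{\mathcal F}=\{(s,\mathcal G)\in T:\mathcal G\sim\mathcal F\}$ and $S\approx T$ iff $(S^{\mathcal F})^-=(T^{\mathcal F})^-$ for all $\mathcal F\in\mathbb F_\sigma$. $\mathcal K$ is causally downward closed if $T\in\mathcal K$ and $S$ a causal subteam of $T$ imply $S\in\mathcal K$; closed under equivalence if $T\in\mathcal K$ and $T\approx S$ imply $S\in\mathcal K$.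 *)

theory Defs
  imports Main "HOL-Library.FuncSet"
begin

text \<open>A signature is given by a set Dom of variables (type 'v) and a range function
  Ran :: 'v => 'a set.\<close>

definition sig_ok :: "'v set \<Rightarrow> ('v \<Rightarrow> 'a set) \<Rightarrow> bool" where
  "sig_ok D R \<longleftrightarrow> finite D \<and> D \<noteq> {} \<and> (\<forall>X\<in>D. finite (R X) \<and> R X \<noteq> {})"

text \<open>Assignments on Dom: extensional functions (value undefined outside Dom).\<close>
definition assigns :: "'v set \<Rightarrow> ('v \<Rightarrow> 'a set) \<Rightarrow> ('v \<Rightarrow> 'a) set" where
  "assigns D R = PiE D R"

text \<open>A system of functions: endogenous variables, parent sets, and the functions
  F_V : Ran(PA_V) -> Ran(V), where an element of Ran(PA_V) is an extensional function on PA_V.\<close>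
record ('v, 'a) sysf =
  sf_en :: "'v set"
  sf_pa :: "'v \<Rightarrow> 'v set"
  sf_fn :: "'v \<Rightarrow> ('v \<Rightarrow> 'a) \<Rightarrow> 'a"

definition parent_graph :: "('v, 'a) sysf \<Rightarrow> ('v \<times> 'v) set" where
  "parent_graph F = {(W, V). V \<in> sf_en F \<and> W \<in> sf_pa F V}"

text \<open>The (finite) set of recursive systems of functions over the signature (canonically
  represented: no parents / undefined function outside the endogenous variables).\<close>
definition systems :: "'v set \<Rightarrow> ('v \<Rightarrow> 'a set) \<Rightarrow> ('v, 'a) sysf set" where
  "systems D R = {F. sf_en F \<subseteq> D
      \<and> (\<forall>V. V \<notin> sf_en F \<longrightarrow> sf_pa F V = {} \<and> sf_fn F V = (\<lambda>_. undefined))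
      \<and> (\<forall>V\<in>sf_en F. sf_pa F V \<subseteq> D - {V}
            \<and> sf_fn F V \<in> PiE (PiE (sf_pa F V) R) (\<lambda>_. R V))
      \<and> acyclic (parent_graph F)}"

definition compatible :: "('v \<Rightarrow> 'a) \<Rightarrow> ('v, 'a) sysf \<Rightarrow> bool" where
  "compatible s F \<longleftrightarrow> (\<forall>V\<in>sf_en F. s V = sf_fn F V (restrict s (sf_pa F V)))"

definition compat_pairs :: "'v set \<Rightarrow> ('v \<Rightarrow> 'a set) \<Rightarrow> (('v \<Rightarrow> 'a) \<times> ('v, 'a) sysf) set" where
  "compat_pairs D R = {(s, F). F \<in> systems D R \<and> s \<in> assigns D R \<and> compatible s F}"

type_synonym ('v, 'a) interv = "('v \<times> 'a) list"

definition consistent :: "('v, 'a) interv \<Rightarrow> bool" where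
  "consistent xs \<longleftrightarrow> (\<forall>(X, x)\<in>set xs. \<forall>(X', x')\<in>set xs. X = X' \<longrightarrow> x = x')"

definition ivars :: "('v, 'a) interv \<Rightarrow> 'v set" where
  "ivars xs = fst ` set xs"

definition sys_do :: "('v, 'a) interv \<Rightarrow> ('v, 'a) sysf \<Rightarrow> ('v, 'a) sysf" where
  "sys_do xs F = \<lparr> sf_en = sf_en F - ivars xs,
     sf_pa = (\<lambda>V. if V \<in> sf_en F - ivars xs then sf_pa F V else {}),
     sf_fn = (\<lambda>V. if V \<in> sf_en F - ivars xs then sf_fn F V else (\<lambda>_. undefined)) \<rparr>"

text \<open>s^F_{X=x}: the recursive definition is realised by iterating the defining equations
  card Dom times starting from s with X set to x (for recursive F this reaches the
  fixed point, i.e. the recursively defined assignment).\<close>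
definition do_assign :: "'v set \<Rightarrow> ('v, 'a) interv \<Rightarrow> ('v, 'a) sysf \<Rightarrow> ('v \<Rightarrow> 'a) \<Rightarrow> ('v \<Rightarrow> 'a)" where
  "do_assign D xs F s =
     ((\<lambda>t V. if V \<in> ivars xs then the (map_of xs V)
             else if V \<in> sf_en F then sf_fn F V (restrict t (sf_pa F V))
             else s V) ^^ card D)
     (\<lambda>V. if V \<in> ivars xs then the (map_of xs V) else s V)"

datatype ('v, 'a) fm =
    Eq 'v 'a
  | Dep "'v list" 'v
  | Neg "('v, 'a) fm"
  | Conj "('v, 'a) fm" "('v, 'a) fm"
  | Disj "('v, 'a) fm" "('v, 'a) fm"
  | GDisj "('v, 'a) fm" "('v, 'a) fm"
  | Cf "('v, 'a) interv" "('v, 'a) fm"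

fun wf_fm :: "'v set \<Rightarrow> ('v \<Rightarrow> 'a set) \<Rightarrow> ('v, 'a) fm \<Rightarrow> bool" where
  "wf_fm D R (Eq X x) = (X \<in> D \<and> x \<in> R X)"
| "wf_fm D R (Dep Xs Y) = (set Xs \<subseteq> D \<and> Y \<in> D)"
| "wf_fm D R (Neg a) = wf_fm D R a"
| "wf_fm D R (Conj p q) = (wf_fm D R p \<and> wf_fm D R q)"
| "wf_fm D R (Disj p q) = (wf_fm D R p \<and> wf_fm D R q)"
| "wf_fm D R (GDisj p q) = (wf_fm D R p \<and> wf_fm D R q)"
| "wf_fm D R (Cf xs p) = ((\<forall>(X, x)\<in>set xs. X \<in> D \<and> x \<in> R X) \<and> wf_fm D R p)"

fun is_CO :: "('v, 'a) fm \<Rightarrow> bool" where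
  "is_CO (Eq X x) = True"
| "is_CO (Dep Xs Y) = False"
| "is_CO (Neg a) = is_CO a"
| "is_CO (Conj p q) = (is_CO p \<and> is_CO q)"
| "is_CO (Disj p q) = (is_CO p \<and> is_CO q)"
| "is_CO (GDisj p q) = False"
| "is_CO (Cf xs p) = is_CO p"

fun is_COsq :: "('v, 'a) fm \<Rightarrow> bool" where
  "is_COsq (Eq X x) = True"
| "is_COsq (Dep Xs Y) = False"
| "is_COsq (Neg a) = is_CO a"
| "is_COsq (Conj p q) = (is_COsq p \<and> is_COsq q)"
| "is_COsq (Disj p q) = (is_COsq p \<and> is_COsq q)"
| "is_COsq (GDisj p q) = (is_COsq p \<and> is_COsq q)"
| "is_COsq (Cf xs p) = is_COsq p"

fun is_COD :: "('v, 'a) fm \<Rightarrow> bool" where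
  "is_COD (Eq X x) = True"
| "is_COD (Dep Xs Y) = True"
| "is_COD (Neg a) = is_CO a"
| "is_COD (Conj p q) = (is_COD p \<and> is_COD q)"
| "is_COD (Disj p q) = (is_COD p \<and> is_COD q)"
| "is_COD (GDisj p q) = False"
| "is_COD (Cf xs p) = is_COD p"

type_synonym ('v, 'a) cteam = "('v \<Rightarrow> 'a) set \<times> ('v, 'a) sysf"

definition empty_sys :: "('v, 'a) sysf" where
  "empty_sys = \<lparr> sf_en = {}, sf_pa = (\<lambda>_. {}), sf_fn = (\<lambda>_ _. undefined) \<rparr>"

text \<open>All causal teams with empty team component are identified with the single
  representative ({}, empty_sys).\<close>
definition causal_teams :: "'v set \<Rightarrow> ('v \<Rightarrow> 'a set) \<Rightarrow> ('v, 'a) cteam set" where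
  "causal_teams D R = {(S, F). F \<in> systems D R \<and> S \<subseteq> assigns D R
      \<and> (\<forall>s\<in>S. compatible s F) \<and> (S = {} \<longrightarrow> F = empty_sys)}"

definition ct_norm :: "('v, 'a) cteam \<Rightarrow> ('v, 'a) cteam" where
  "ct_norm T = (if fst T = {} then ({}, empty_sys) else T)"

definition causal_subteam :: "('v, 'a) cteam \<Rightarrow> ('v, 'a) cteam \<Rightarrow> bool" where
  "causal_subteam S T \<longleftrightarrow> (\<exists>S'. S' \<subseteq> fst T \<and> S = ct_norm (S', snd T))"

definition team_do :: "'v set \<Rightarrow> ('v, 'a) interv \<Rightarrow> ('v, 'a) cteam \<Rightarrow> ('v, 'a) cteam" where
  "team_do D xs T = (do_assign D xs (snd T) ` fst T, sys_do xs (snd T))"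

fun sat_c :: "'v set \<Rightarrow> ('v, 'a) cteam \<Rightarrow> ('v, 'a) fm \<Rightarrow> bool" where
  "sat_c D T (Eq X x) = (\<forall>s\<in>fst T. s X = x)"
| "sat_c D T (Dep Xs Y) = (\<forall>s\<in>fst T. \<forall>s'\<in>fst T. map s Xs = map s' Xs \<longrightarrow> s Y = s' Y)"
| "sat_c D T (Neg a) = (\<forall>s\<in>fst T. \<not> sat_c D ({s}, snd T) a)"
| "sat_c D T (Conj p q) = (sat_c D T p \<and> sat_c D T q)"
| "sat_c D T (Disj p q) = (\<exists>S1 S2. S1 \<subseteq> fst T \<and> S2 \<subseteq> fst T \<and> S1 \<union> S2 = fst T
       \<and> sat_c D (S1, snd T) p \<and> sat_c D (S2, snd T) q)"
| "sat_c D T (GDisj p q) = (sat_c D T p \<or> sat_c D T q)"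
| "sat_c D T (Cf xs p) = (\<not> consistent xs \<or> sat_c D (team_do D xs T) p)"

type_synonym ('v, 'a) gteam = "(('v \<Rightarrow> 'a) \<times> ('v, 'a) sysf) set"

definition gen_teams :: "'v set \<Rightarrow> ('v \<Rightarrow> 'a set) \<Rightarrow> ('v, 'a) gteam set" where
  "gen_teams D R = Pow (compat_pairs D R)"

definition gteam_do :: "'v set \<Rightarrow> ('v, 'a) interv \<Rightarrow> ('v, 'a) gteam \<Rightarrow> ('v, 'a) gteam" where
  "gteam_do D xs T = (\<lambda>(s, F). (do_assign D xs F s, sys_do xs F)) ` T"

fun sat_g :: "'v set \<Rightarrow> ('v, 'a) gteam \<Rightarrow> ('v, 'a) fm \<Rightarrow> bool" where
  "sat_g D T (Eq X x) = (\<forall>p\<in>T. fst p X = x)"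
| "sat_g D T (Dep Xs Y) = (\<forall>p\<in>T. \<forall>p'\<in>T. map (fst p) Xs = map (fst p') Xs \<longrightarrow> fst p Y = fst p' Y)"
| "sat_g D T (Neg a) = (\<forall>p\<in>T. \<not> sat_g D {p} a)"
| "sat_g D T (Conj p q) = (sat_g D T p \<and> sat_g D T q)"
| "sat_g D T (Disj p q) = (\<exists>T1 T2. T = T1 \<union> T2 \<and> sat_g D T1 p \<and> sat_g D T2 q)"
| "sat_g D T (GDisj p q) = (sat_g D T p \<or> sat_g D T q)"
| "sat_g D T (Cf xs p) = (\<not> consistent xs \<or> sat_g D (gteam_do D xs T) p)"

definition const_vars :: "('v \<Rightarrow> 'a set) \<Rightarrow> ('v, 'a) sysf \<Rightarrow> 'v set" where
  "const_vars R F = {V \<in> sf_en F. \<forall>f\<in>PiE (sf_pa F V) R. \<forall>g\<in>PiE (sf_pa F V) R.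
       sf_fn F V f = sf_fn F V g}"

definition fn_sim :: "('v \<Rightarrow> 'a set) \<Rightarrow> ('v, 'a) sysf \<Rightarrow> ('v, 'a) sysf \<Rightarrow> 'v \<Rightarrow> bool" where
  "fn_sim R F G V \<longleftrightarrow> (\<forall>f\<in>PiE (sf_pa F V) R. \<forall>g\<in>PiE (sf_pa G V) R.
       (\<forall>W\<in>sf_pa F V \<inter> sf_pa G V. f W = g W) \<longrightarrow> sf_fn F V f = sf_fn G V g)"

definition sys_sim :: "('v \<Rightarrow> 'a set) \<Rightarrow> ('v, 'a) sysf \<Rightarrow> ('v, 'a) sysf \<Rightarrow> bool" where
  "sys_sim R F G \<longleftrightarrow> sf_en F - const_vars R F = sf_en G - const_vars R G
     \<and> (\<forall>V\<in>sf_en F - const_vars R F. fn_sim R F G V)"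

definition ct_equiv :: "('v \<Rightarrow> 'a set) \<Rightarrow> ('v, 'a) cteam \<Rightarrow> ('v, 'a) cteam \<Rightarrow> bool" where
  "ct_equiv R T S \<longleftrightarrow> fst T \<noteq> {} \<and> fst S \<noteq> {} \<and> fst T = fst S \<and> sys_sim R (snd T) (snd S)"

definition gsub :: "('v \<Rightarrow> 'a set) \<Rightarrow> ('v, 'a) sysf \<Rightarrow> ('v, 'a) gteam \<Rightarrow> ('v, 'a) gteam" where
  "gsub R F T = {(s, G) \<in> T. sys_sim R G F}"

definition g_equiv :: "'v set \<Rightarrow> ('v \<Rightarrow> 'a set) \<Rightarrow> ('v, 'a) gteam \<Rightarrow> ('v, 'a) gteam \<Rightarrow> bool" where
  "g_equiv D R S T \<longleftrightarrow> (\<forall>F\<in>systems D R. fst ` gsub R F S = fst ` gsub R F T)"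

definition c_down_closed :: "('v, 'a) cteam set \<Rightarrow> bool" where
  "c_down_closed K \<longleftrightarrow> (\<forall>T\<in>K. \<forall>S. causal_subteam S T \<longrightarrow> S \<in> K)"

definition c_equiv_closed :: "'v set \<Rightarrow> ('v \<Rightarrow> 'a set) \<Rightarrow> ('v, 'a) cteam set \<Rightarrow> bool" where
  "c_equiv_closed D R K \<longleftrightarrow> (\<forall>T\<in>K. \<forall>S\<in>causal_teams D R. ct_equiv R T S \<longrightarrow> S \<in> K)"

definition g_down_closed :: "('v, 'a) gteam set \<Rightarrow> bool" where
  "g_down_closed K \<longleftrightarrow> (\<forall>T\<in>K. \<forall>S. S \<subseteq> T \<longrightarrow> S \<in> K)"

definition g_equiv_closed :: "'v set \<Rightarrow> ('v \<Rightarrow> 'a set) \<Rightarrow> ('v, 'a) gteam set \<Rightarrow> bool" where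
  "g_equiv_closed D R K \<longleftrightarrow> (\<forall>T\<in>K. \<forall>S\<in>gen_teams D R. g_equiv D R T S \<longrightarrow> S \<in> K)"

end

theory Submission
  imports Defs
begin

text \<open>Call pairs (s, F) and (s, G) similar when F and G are equivalent. Satisfaction is
  preserved under subteams and under passing to a similar team, which gives soundness.
  Conversely, a pair is determined up to similarity by its assignment and by its responses,
  the values each variable V takes after intervening on all other variables; a CO formula
  can state these, so a tensor disjunction of such characteristic formulas expresses that
  every pair of a team is similar to one of a given finite team, and a global disjunction
  over the members of a closed class defines it. Without global disjunction, dependence
  atoms =(;V) after these interventions say that a team lies in a single similarity class,
  so a tensor disjunction of |X| - 1 of them, together with the characteristic formulas
  of the pairs unrelated to X, says that a reduced team X is not covered; conjoining this
  over the reduced teams outside the class defines it. Causal teams are handled through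
  their sets of pairs.\<close>

section \<open>Systems of functions and their equivalence\<close>

lemma sig_okD:
  assumes "sig_ok D R"
  shows "finite D" "D \<noteq> {}" "X \<in> D \<Longrightarrow> finite (R X)" "X \<in> D \<Longrightarrow> R X \<noteq> {}"
  using assms unfolding sig_ok_def by auto

lemma systems_en_subset: "F \<in> systems D R \<Longrightarrow> sf_en F \<subseteq> D"
  unfolding systems_def by blast

lemma systems_pa_subset: "F \<in> systems D R \<Longrightarrow> V \<in> sf_en F \<Longrightarrow> sf_pa F V \<subseteq> D - {V}"
  unfolding systems_def by blast

lemma systems_fn_PiE:
  "F \<in> systems D R \<Longrightarrow> V \<in> sf_en F \<Longrightarrow> sf_fn F V \<in> PiE (PiE (sf_pa F V) R) (\<lambda>_. R V)"
  unfolding systems_def by blast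

lemma systems_outside:
  "F \<in> systems D R \<Longrightarrow> V \<notin> sf_en F \<Longrightarrow> sf_pa F V = {} \<and> sf_fn F V = (\<lambda>_. undefined)"
  unfolding systems_def by blast

lemma systems_fn_in:
  "F \<in> systems D R \<Longrightarrow> V \<in> sf_en F \<Longrightarrow> f \<in> PiE (sf_pa F V) R \<Longrightarrow> sf_fn F V f \<in> R V"
  by (rule PiE_mem[OF systems_fn_PiE])

lemma sys_do_systems:
  assumes "F \<in> systems D R"
  shows "sys_do xs F \<in> systems D R"
proof -
  have "parent_graph (sys_do xs F) \<subseteq> parent_graph F"
    unfolding parent_graph_def sys_do_def by auto
  then have "acyclic (parent_graph (sys_do xs F))"
    using assms acyclic_subset unfolding systems_def by blast
  moreover have "sf_en (sys_do xs F) \<subseteq> sf_en F" unfolding sys_do_def by auto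
  ultimately show ?thesis
    using assms unfolding systems_def by (auto simp: sys_do_def)
qed

lemma ex_PiE_extension:
  assumes ne: "\<forall>U\<in>E. R U \<noteq> {}" and "P \<subseteq> E" "Q \<subseteq> E"
    and f: "f \<in> PiE P R" and g: "g \<in> PiE Q R" and agree: "\<forall>U\<in>P \<inter> Q. f U = g U"
  shows "\<exists>w\<in>PiE E R. restrict w P = f \<and> restrict w Q = g"
proof -
  define w where
    "w = restrict (\<lambda>U. if U \<in> P then f U else if U \<in> Q then g U else (SOME x. x \<in> R U)) E"
  have "w \<in> PiE E R"
    using ne PiE_mem[OF f] PiE_mem[OF g] unfolding w_def by (auto simp: some_in_eq)
  moreover have "restrict w P = f"
    using f \<open>P \<subseteq> E\<close> unfolding w_def by (intro ext) (auto simp: PiE_iff extensional_def)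
  moreover have "restrict w Q = g"
    using g agree \<open>Q \<subseteq> E\<close> unfolding w_def by (intro ext) (auto simp: PiE_iff extensional_def)
  ultimately show ?thesis by blast
qed

lemma fn_sim_iff_extensions:
  assumes ne: "\<forall>U\<in>E. R U \<noteq> {}" and sub: "sf_pa F V \<subseteq> E" "sf_pa G V \<subseteq> E"
  shows "fn_sim R F G V \<longleftrightarrow>
    (\<forall>w\<in>PiE E R. sf_fn F V (restrict w (sf_pa F V)) = sf_fn G V (restrict w (sf_pa G V)))"
proof
  assume sim: "fn_sim R F G V"
  show "\<forall>w\<in>PiE E R. sf_fn F V (restrict w (sf_pa F V)) = sf_fn G V (restrict w (sf_pa G V))"
  proof
    fix w assume "w \<in> PiE E R"
    then have "restrict w (sf_pa F V) \<in> PiE (sf_pa F V) R" "restrict w (sf_pa G V) \<in> PiE (sf_pa G V) R"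
      using sub by (auto simp: restrict_PiE_iff intro: PiE_mem)
    then show "sf_fn F V (restrict w (sf_pa F V)) = sf_fn G V (restrict w (sf_pa G V))"
      using sim unfolding fn_sim_def by simp
  qed
next
  assume ext: "\<forall>w\<in>PiE E R. sf_fn F V (restrict w (sf_pa F V)) = sf_fn G V (restrict w (sf_pa G V))"
  show "fn_sim R F G V"
    unfolding fn_sim_def
  proof (intro ballI impI)
    fix f g assume "f \<in> PiE (sf_pa F V) R" "g \<in> PiE (sf_pa G V) R"
      and "\<forall>W\<in>sf_pa F V \<inter> sf_pa G V. f W = g W"
    then obtain w where "w \<in> PiE E R" "restrict w (sf_pa F V) = f" "restrict w (sf_pa G V) = g"
      using ex_PiE_extension[OF ne sub] by blast
    then show "sf_fn F V f = sf_fn G V g" using ext by blast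
  qed
qed

lemma sys_sim_refl: "sys_sim R F F"
  unfolding sys_sim_def fn_sim_def by (metis IntI PiE_ext)

lemma sys_sim_sym: "sys_sim R F G \<Longrightarrow> sys_sim R G F"
  unfolding sys_sim_def fn_sim_def by (metis Int_commute)

lemma sys_sim_trans:
  assumes sig: "sig_ok D R" and sys: "F \<in> systems D R" "G \<in> systems D R" "H \<in> systems D R"
    and FG: "sys_sim R F G" and GH: "sys_sim R G H"
  shows "sys_sim R F H"
proof -
  have "fn_sim R F H V" if V: "V \<in> sf_en F - const_vars R F" for V
  proof -
    have VG: "V \<in> sf_en G - const_vars R G" and VH: "V \<in> sf_en H - const_vars R H"
      using V FG GH unfolding sys_sim_def by auto
    let ?E = "sf_pa F V \<union> sf_pa G V \<union> sf_pa H V"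
    have sub: "?E \<subseteq> D"
      using V VG VH systems_pa_subset[OF sys(1)] systems_pa_subset[OF sys(2)]
        systems_pa_subset[OF sys(3)] by blast
    then have ne: "\<forall>U\<in>?E. R U \<noteq> {}" using sig_okD(4)[OF sig] by blast
    have "fn_sim R F G V" "fn_sim R G H V" using FG GH V VG unfolding sys_sim_def by auto
    then show ?thesis using fn_sim_iff_extensions[OF ne] by (metis sup_ge1 sup_ge2 le_supI1)
  qed
  then show ?thesis using FG GH unfolding sys_sim_def by blast
qed

text \<open>Interventions keep a pair compatible, but proving so needs the acyclicity of the system.
  Compatibility at the constant variables is all the invariance argument uses, and it is
  preserved by interventions directly.\<close>

definition const_compatible :: "('v \<Rightarrow> 'a set) \<Rightarrow> ('v \<Rightarrow> 'a) \<Rightarrow> ('v, 'a) sysf \<Rightarrow> bool" where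
  "const_compatible R s F \<longleftrightarrow>
     (\<forall>V\<in>const_vars R F. s V = sf_fn F V (restrict s (sf_pa F V)))"

definition const_compat_pairs ::
    "'v set \<Rightarrow> ('v \<Rightarrow> 'a set) \<Rightarrow> (('v \<Rightarrow> 'a) \<times> ('v, 'a) sysf) set" where
  "const_compat_pairs D R = {(s, F). F \<in> systems D R \<and> s \<in> assigns D R \<and> const_compatible R s F}"

definition pair_sim ::
    "('v \<Rightarrow> 'a set) \<Rightarrow> ('v \<Rightarrow> 'a) \<times> ('v, 'a) sysf \<Rightarrow> ('v \<Rightarrow> 'a) \<times> ('v, 'a) sysf \<Rightarrow> bool" where
  "pair_sim R p q \<longleftrightarrow> fst p = fst q \<and> sys_sim R (snd p) (snd q)"

lemma compat_pairs_subset: "compat_pairs D R \<subseteq> const_compat_pairs D R"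
  unfolding compat_pairs_def const_compat_pairs_def compatible_def const_compatible_def
    const_vars_def by auto

lemma const_compat_pairsD:
  assumes "(s, F) \<in> const_compat_pairs D R"
  shows "s \<in> PiE D R" "F \<in> systems D R"
    "V \<in> const_vars R F \<Longrightarrow> s V = sf_fn F V (restrict s (sf_pa F V))"
  using assms unfolding const_compat_pairs_def const_compatible_def assigns_def by auto

lemma const_var_fn_eq:
  assumes p: "(s, F) \<in> const_compat_pairs D R" and V: "V \<in> const_vars R F"
    and f: "f \<in> PiE (sf_pa F V) R"
  shows "sf_fn F V f = s V"
proof -
  have "V \<in> sf_en F" using V unfolding const_vars_def by blast
  then have "restrict s (sf_pa F V) \<in> PiE (sf_pa F V) R"
    using systems_pa_subset[OF const_compat_pairsD(2)[OF p]] const_compat_pairsD(1)[OF p]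
    by (auto simp: restrict_PiE_iff intro: PiE_mem)
  then have "sf_fn F V f = sf_fn F V (restrict s (sf_pa F V))"
    using V f unfolding const_vars_def by blast
  also have "\<dots> = s V" using const_compat_pairsD(3)[OF p V] by simp
  finally show ?thesis .
qed

lemma pair_sim_refl: "pair_sim R p p"
  unfolding pair_sim_def by (simp add: sys_sim_refl)

lemma pair_sim_sym: "pair_sim R p q \<Longrightarrow> pair_sim R q p"
  unfolding pair_sim_def by (simp add: sys_sim_sym)

lemma pair_sim_trans:
  assumes "sig_ok D R"
    and "p \<in> const_compat_pairs D R" "q \<in> const_compat_pairs D R" "r \<in> const_compat_pairs D R"
    and "pair_sim R p q" "pair_sim R q r"
  shows "pair_sim R p r"
  using assms sys_sim_trans unfolding pair_sim_def const_compat_pairs_def by auto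

definition do_step ::
    "('v, 'a) interv \<Rightarrow> ('v, 'a) sysf \<Rightarrow> ('v \<Rightarrow> 'a) \<Rightarrow> ('v \<Rightarrow> 'a) \<Rightarrow> ('v \<Rightarrow> 'a)" where
  "do_step xs F s t = (\<lambda>V. if V \<in> ivars xs then the (map_of xs V)
      else if V \<in> sf_en F then sf_fn F V (restrict t (sf_pa F V)) else s V)"

definition do_init :: "('v, 'a) interv \<Rightarrow> ('v \<Rightarrow> 'a) \<Rightarrow> ('v \<Rightarrow> 'a)" where
  "do_init xs s = (\<lambda>V. if V \<in> ivars xs then the (map_of xs V) else s V)"

lemma do_assign_iterate: "do_assign D xs F s = (do_step xs F s ^^ card D) (do_init xs s)"
  unfolding do_assign_def do_step_def do_init_def by simp

definition wf_interv :: "'v set \<Rightarrow> ('v \<Rightarrow> 'a set) \<Rightarrow> ('v, 'a) interv \<Rightarrow> bool" where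
  "wf_interv D R xs \<longleftrightarrow> (\<forall>(X, x)\<in>set xs. X \<in> D \<and> x \<in> R X)"

lemma wf_interv_ivars: "wf_interv D R xs \<Longrightarrow> ivars xs \<subseteq> D"
  unfolding wf_interv_def ivars_def by auto

lemma wf_interv_value:
  assumes "wf_interv D R xs" "V \<in> ivars xs"
  shows "the (map_of xs V) \<in> R V"
proof -
  obtain x where "map_of xs V = Some x"
    using assms(2) unfolding ivars_def by (metis map_of_eq_None_iff option.exhaust)
  then show ?thesis using assms(1) map_of_SomeD unfolding wf_interv_def by fastforce
qed

lemma do_step_PiE:
  assumes xs: "wf_interv D R xs" and F: "F \<in> systems D R" and s: "s \<in> PiE D R"
    and t: "t \<in> PiE D R"
  shows "do_step xs F s t \<in> PiE D R"
proof -
  have "do_step xs F s t V \<in> R V" if "V \<in> D" for V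
  proof -
    have "restrict t (sf_pa F V) \<in> PiE (sf_pa F V) R" if "V \<in> sf_en F"
      using t systems_pa_subset[OF F that] by (auto simp: restrict_PiE_iff intro: PiE_mem)
    then show ?thesis
      using wf_interv_value[OF xs] systems_fn_in[OF F] PiE_mem[OF s \<open>V \<in> D\<close>]
      unfolding do_step_def by auto
  qed
  moreover have "do_step xs F s t V = undefined" if "V \<notin> D" for V
    using that s wf_interv_ivars[OF xs] systems_en_subset[OF F]
    unfolding do_step_def by (auto simp: PiE_iff extensional_def)
  ultimately show ?thesis by (auto simp: PiE_iff extensional_def)
qed

lemma do_iterate_PiE:
  assumes "wf_interv D R xs" "F \<in> systems D R" "s \<in> PiE D R"
  shows "(do_step xs F s ^^ k) (do_init xs s) \<in> PiE D R"
proof (induction k)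
  case 0
  show ?case
    using assms wf_interv_value[OF assms(1)] wf_interv_ivars[OF assms(1)]
    unfolding do_init_def by (fastforce simp: PiE_iff extensional_def)
next
  case (Suc k)
  then show ?case using do_step_PiE[OF assms] by simp
qed

lemma do_assign_last_step:
  assumes sig: "sig_ok D R" and "wf_interv D R xs" "F \<in> systems D R" "s \<in> PiE D R"
  obtains t where "t \<in> PiE D R" "\<forall>U\<in>ivars xs. t U = the (map_of xs U)"
    "do_assign D xs F s = do_step xs F s t"
proof -
  obtain m where m: "card D = Suc m"
    using sig_okD(1,2)[OF sig] by (metis card_gt_0_iff gr0_implies_Suc)
  let ?t = "(do_step xs F s ^^ m) (do_init xs s)"
  have "\<forall>U\<in>ivars xs. ?t U = the (map_of xs U)"
    by (cases m) (simp_all add: do_init_def do_step_def)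
  moreover have "do_assign D xs F s = do_step xs F s ?t"
    unfolding do_assign_iterate m by simp
  ultimately show ?thesis using that do_iterate_PiE[OF assms(2-4)] by blast
qed

lemma do_assign_PiE:
  assumes "sig_ok D R" "wf_interv D R xs" "F \<in> systems D R" "s \<in> PiE D R"
  shows "do_assign D xs F s \<in> PiE D R"
  using do_assign_last_step[OF assms] do_step_PiE[OF assms(2-4)] by metis

lemma do_step_passive:
  assumes p: "(s, F) \<in> const_compat_pairs D R" and t: "t \<in> PiE D R"
    and U: "U \<notin> ivars xs" "U \<notin> sf_en F - const_vars R F"
  shows "do_step xs F s t U = s U"
proof (cases "U \<in> sf_en F")
  case True
  then have "restrict t (sf_pa F U) \<in> PiE (sf_pa F U) R"
    using t systems_pa_subset[OF const_compat_pairsD(2)[OF p]]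
    by (auto simp: restrict_PiE_iff intro: PiE_mem)
  then show ?thesis
    using True U const_var_fn_eq[OF p] unfolding do_step_def by simp
qed (use U in \<open>simp add: do_step_def\<close>)

lemma do_step_sim:
  assumes pF: "(s, F) \<in> const_compat_pairs D R" and pG: "(s, G) \<in> const_compat_pairs D R"
    and sim: "sys_sim R F G" and t: "t \<in> PiE D R"
  shows "do_step xs F s t = do_step xs G s t"
proof
  fix U
  have FG: "U \<in> sf_en F - const_vars R F \<longleftrightarrow> U \<in> sf_en G - const_vars R G"
    using sim unfolding sys_sim_def by simp
  show "do_step xs F s t U = do_step xs G s t U"
  proof (cases "U \<notin> ivars xs \<and> U \<in> sf_en F - const_vars R F")
    case True
    have sub: "sf_pa F U \<subseteq> D" "sf_pa G U \<subseteq> D"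
      using True FG systems_pa_subset[OF const_compat_pairsD(2)[OF pF], of U]
        systems_pa_subset[OF const_compat_pairsD(2)[OF pG], of U] by auto
    have ne: "\<forall>U\<in>D. R U \<noteq> {}" using t by (auto simp: PiE_iff)
    have "fn_sim R F G U" using sim True unfolding sys_sim_def by blast
    then have "sf_fn F U (restrict t (sf_pa F U)) = sf_fn G U (restrict t (sf_pa G U))"
      using t unfolding fn_sim_iff_extensions[OF ne sub] by blast
    then show ?thesis using True FG unfolding do_step_def by simp
  next
    case False
    show ?thesis
    proof (cases "U \<in> ivars xs")
      case True
      then show ?thesis unfolding do_step_def by simp
    next
      case notin: False
      then have "U \<notin> sf_en F - const_vars R F" "U \<notin> sf_en G - const_vars R G"
        using False FG by auto
      then show ?thesis
        using do_step_passive[OF pF t notin] do_step_passive[OF pG t notin] by simp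
    qed
  qed
qed

lemma do_assign_sim:
  assumes pF: "(s, F) \<in> const_compat_pairs D R" and pG: "(s, G) \<in> const_compat_pairs D R"
    and sim: "sys_sim R F G" and xs: "wf_interv D R xs"
  shows "do_assign D xs F s = do_assign D xs G s"
proof -
  have "(do_step xs F s ^^ k) (do_init xs s) = (do_step xs G s ^^ k) (do_init xs s)" for k
  proof (induction k)
    case (Suc k)
    have "(do_step xs F s ^^ k) (do_init xs s) \<in> PiE D R"
      by (rule do_iterate_PiE[OF xs const_compat_pairsD(2,1)[OF pF]])
    then have "do_step xs F s ((do_step xs F s ^^ k) (do_init xs s))
        = do_step xs G s ((do_step xs F s ^^ k) (do_init xs s))"
      by (rule do_step_sim[OF pF pG sim])
    then show ?case using Suc.IH by simp
  qed simp
  then show ?thesis unfolding do_assign_iterate by simp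
qed

lemma sys_do_simps:
  "sf_en (sys_do xs F) = sf_en F - ivars xs"
  "V \<in> sf_en F - ivars xs \<Longrightarrow> sf_pa (sys_do xs F) V = sf_pa F V"
  "V \<in> sf_en F - ivars xs \<Longrightarrow> sf_fn (sys_do xs F) V = sf_fn F V"
  unfolding sys_do_def by simp_all

lemma const_vars_sys_do: "const_vars R (sys_do xs F) = const_vars R F - ivars xs"
proof (rule set_eqI)
  fix V
  show "V \<in> const_vars R (sys_do xs F) \<longleftrightarrow> V \<in> const_vars R F - ivars xs"
  proof (cases "V \<in> sf_en F - ivars xs")
    case True
    then show ?thesis unfolding const_vars_def by (simp add: sys_do_simps)
  next
    case False
    then show ?thesis unfolding const_vars_def sys_do_simps(1) by blast
  qed
qed

lemma sys_do_sim:
  assumes sim: "sys_sim R F G"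
  shows "sys_sim R (sys_do xs F) (sys_do xs G)"
proof -
  have active: "sf_en (sys_do xs H) - const_vars R (sys_do xs H) = (sf_en H - const_vars R H) - ivars xs"
    for H
    unfolding const_vars_sys_do sys_do_simps(1) by blast
  have "fn_sim R (sys_do xs F) (sys_do xs G) V"
    if V: "V \<in> (sf_en F - const_vars R F) - ivars xs" for V
  proof -
    have "V \<in> sf_en F - ivars xs" "V \<in> sf_en G - ivars xs" "fn_sim R F G V"
      using V sim unfolding sys_sim_def by auto
    then show ?thesis unfolding fn_sim_def sys_do_simps(2,3)[OF \<open>V \<in> sf_en F - ivars xs\<close>]
      sys_do_simps(2,3)[OF \<open>V \<in> sf_en G - ivars xs\<close>] by blast
  qed
  moreover have "(sf_en F - const_vars R F) - ivars xs = (sf_en G - const_vars R G) - ivars xs"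
    using sim unfolding sys_sim_def by simp
  ultimately show ?thesis unfolding sys_sim_def active by blast
qed

definition pair_do ::
    "'v set \<Rightarrow> ('v, 'a) interv \<Rightarrow> ('v \<Rightarrow> 'a) \<times> ('v, 'a) sysf \<Rightarrow> ('v \<Rightarrow> 'a) \<times> ('v, 'a) sysf" where
  "pair_do D xs = (\<lambda>(s, F). (do_assign D xs F s, sys_do xs F))"

lemma gteam_do_eq_image: "gteam_do D xs T = pair_do D xs ` T"
  unfolding gteam_do_def pair_do_def ..

lemma pair_do_const_compat:
  assumes sig: "sig_ok D R" and p: "p \<in> const_compat_pairs D R" and xs: "wf_interv D R xs"
  shows "pair_do D xs p \<in> const_compat_pairs D R"
proof -
  obtain s F where pe: "p = (s, F)" by fastforce
  note sF = p[unfolded pe]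
  note s = const_compat_pairsD(1)[OF sF] and F = const_compat_pairsD(2)[OF sF]
  let ?s' = "do_assign D xs F s"
  obtain t where t: "t \<in> PiE D R" and last: "?s' = do_step xs F s t"
    using do_assign_last_step[OF sig xs F s] by metis
  have s': "?s' \<in> PiE D R" by (rule do_assign_PiE[OF sig xs F s])
  have "const_compatible R ?s' (sys_do xs F)"
    unfolding const_compatible_def
  proof
    fix V assume "V \<in> const_vars R (sys_do xs F)"
    then have V: "V \<in> const_vars R F" "V \<notin> ivars xs"
      unfolding const_vars_sys_do by auto
    then have VF: "V \<in> sf_en F - ivars xs" unfolding const_vars_def by blast
    have "restrict ?s' (sf_pa F V) \<in> PiE (sf_pa F V) R"
      using s' systems_pa_subset[OF F] VF by (auto simp: restrict_PiE_iff intro: PiE_mem)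
    then have "sf_fn F V (restrict ?s' (sf_pa F V)) = s V"
      by (rule const_var_fn_eq[OF sF V(1)])
    moreover have "?s' V = s V"
      using do_step_passive[OF sF t V(2)] V(1) unfolding last by blast
    ultimately show "?s' V = sf_fn (sys_do xs F) V (restrict ?s' (sf_pa (sys_do xs F) V))"
      using VF by (simp add: sys_do_simps)
  qed
  then show ?thesis
    using s' sys_do_systems[OF F]
    unfolding pe pair_do_def const_compat_pairs_def assigns_def by simp
qed

lemma pair_sim_pair_do:
  assumes "p \<in> const_compat_pairs D R" "q \<in> const_compat_pairs D R" "pair_sim R p q"
    and "wf_interv D R xs"
  shows "pair_sim R (pair_do D xs p) (pair_do D xs q)"
proof -
  obtain s F G where "p = (s, F)" "q = (s, G)" "sys_sim R F G"
    using assms(3) unfolding pair_sim_def by (metis prod.collapse)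
  then show ?thesis
    using assms do_assign_sim[of s F D R G xs] sys_do_sim[of R F G xs]
    unfolding pair_sim_def pair_do_def by simp
qed

section \<open>Invariance of satisfaction\<close>

definition covered ::
    "('v \<Rightarrow> 'a set) \<Rightarrow> ('v, 'a) gteam \<Rightarrow> ('v, 'a) gteam \<Rightarrow> bool" where
  "covered R Y T \<longleftrightarrow> (\<forall>q\<in>Y. \<exists>p\<in>T. pair_sim R q p)"

definition team_sim :: "('v \<Rightarrow> 'a set) \<Rightarrow> ('v, 'a) gteam \<Rightarrow> ('v, 'a) gteam \<Rightarrow> bool" where
  "team_sim R S T \<longleftrightarrow> covered R S T \<and> covered R T S"

lemma covered_refl: "covered R T T"
  unfolding covered_def using pair_sim_refl by blast

lemma covered_subset: "Y \<subseteq> T \<Longrightarrow> covered R Y T"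
  unfolding covered_def using pair_sim_refl by blast

lemma covered_trans:
  assumes sig: "sig_ok D R" and ccp: "Y \<subseteq> const_compat_pairs D R" "Z \<subseteq> const_compat_pairs D R"
    "T \<subseteq> const_compat_pairs D R" and YZ: "covered R Y Z" and ZT: "covered R Z T"
  shows "covered R Y T"
  unfolding covered_def
proof
  fix q assume q: "q \<in> Y"
  then obtain z where z: "z \<in> Z" "pair_sim R q z" using YZ unfolding covered_def by blast
  then obtain p where p: "p \<in> T" "pair_sim R z p" using ZT unfolding covered_def by blast
  have "pair_sim R q p" using pair_sim_trans[OF sig _ _ _ z(2) p(2)] q z(1) p(1) ccp by blast
  then show "\<exists>p\<in>T. pair_sim R q p" using p(1) by blast
qed

lemma team_sim_sym: "team_sim R S T \<Longrightarrow> team_sim R T S"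
  unfolding team_sim_def by blast

lemma team_sim_singleton: "pair_sim R p q \<Longrightarrow> team_sim R {p} {q}"
  unfolding team_sim_def covered_def using pair_sim_sym by blast

lemma team_sim_restrict:
  assumes "covered R Y T"
  shows "team_sim R Y {p\<in>T. \<exists>q\<in>Y. pair_sim R q p}"
  using assms pair_sim_sym unfolding team_sim_def covered_def by blast

lemma team_sim_Un_split:
  assumes sim: "team_sim R (S1 \<union> S2) T"
  obtains T1 T2 where "T = T1 \<union> T2" "team_sim R S1 T1" "team_sim R S2 T2"
proof
  let ?T = "\<lambda>S. {q\<in>T. \<exists>p\<in>S. pair_sim R p q}"
  have "covered R T (S1 \<union> S2)" using sim unfolding team_sim_def by blast
  then show "T = ?T S1 \<union> ?T S2" unfolding covered_def using pair_sim_sym by blast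
  have "covered R S1 T" "covered R S2 T" using sim unfolding team_sim_def covered_def by blast+
  then show "team_sim R S1 (?T S1)" "team_sim R S2 (?T S2)"
    unfolding team_sim_def covered_def using pair_sim_sym by blast+
qed

lemma team_sim_pair_do:
  assumes ccp: "S \<subseteq> const_compat_pairs D R" "T \<subseteq> const_compat_pairs D R"
    and sim: "team_sim R S T" and xs: "wf_interv D R xs"
  shows "team_sim R (pair_do D xs ` S) (pair_do D xs ` T)"
proof -
  have "covered R (pair_do D xs ` A) (pair_do D xs ` B)"
    if AB: "A \<subseteq> const_compat_pairs D R" "B \<subseteq> const_compat_pairs D R" "covered R A B" for A B
    unfolding covered_def
  proof
    fix q' assume "q' \<in> pair_do D xs ` A"
    then obtain q where q: "q \<in> A" "q' = pair_do D xs q" by blast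
    then obtain p where p: "p \<in> B" "pair_sim R q p" using AB(3) unfolding covered_def by blast
    then have "pair_sim R q' (pair_do D xs p)"
      using pair_sim_pair_do[OF _ _ p(2) xs] q AB(1,2) by blast
    then show "\<exists>p'\<in>pair_do D xs ` B. pair_sim R q' p'" using p(1) by blast
  qed
  then show ?thesis using ccp sim unfolding team_sim_def by blast
qed

lemma sat_g_subset: "sat_g D T \<phi> \<Longrightarrow> S \<subseteq> T \<Longrightarrow> sat_g D S \<phi>"
proof (induction \<phi> arbitrary: S T)
  case (Disj a b)
  then obtain T1 T2 where "T = T1 \<union> T2" "sat_g D T1 a" "sat_g D T2 b" by auto
  moreover have "S = (S \<inter> T1) \<union> (S \<inter> T2)" using Disj.prems(2) calculation(1) by auto
  ultimately show ?case using Disj.IH by (metis Int_lower2 sat_g.simps(5))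
next
  case (Cf xs a)
  have "pair_do D xs ` S \<subseteq> pair_do D xs ` T" using Cf.prems(2) by (rule image_mono)
  then show ?case using Cf by (auto simp: gteam_do_eq_image)
qed auto

lemma sat_g_team_sim:
  assumes sig: "sig_ok D R"
  shows "wf_fm D R \<phi> \<Longrightarrow> S \<subseteq> const_compat_pairs D R \<Longrightarrow> T \<subseteq> const_compat_pairs D R
    \<Longrightarrow> team_sim R S T \<Longrightarrow> sat_g D S \<phi> \<Longrightarrow> sat_g D T \<phi>"
proof (induction \<phi> arbitrary: S T)
  case (Eq X x)
  have "\<forall>q\<in>T. \<exists>p\<in>S. fst q = fst p"
    using Eq.prems(4) unfolding team_sim_def covered_def pair_sim_def by blast
  then show ?case using Eq.prems(5) unfolding sat_g.simps by metis
next
  case (Dep Xs Y)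
  have match: "\<exists>p\<in>S. fst q = fst p" if "q \<in> T" for q
    using Dep.prems(4) that unfolding team_sim_def covered_def pair_sim_def by blast
  show ?case unfolding sat_g.simps
  proof (intro ballI impI)
    fix q q' assume q: "q \<in> T" "q' \<in> T" and eq: "map (fst q) Xs = map (fst q') Xs"
    obtain p where p: "p \<in> S" "fst q = fst p" using match[OF q(1)] by blast
    obtain p' where p': "p' \<in> S" "fst q' = fst p'" using match[OF q(2)] by blast
    have "map (fst p) Xs = map (fst p') Xs \<longrightarrow> fst p Y = fst p' Y"
      using Dep.prems(5) p(1) p'(1) unfolding sat_g.simps by blast
    then show "fst q Y = fst q' Y" using eq p(2) p'(2) by simp
  qed
next
  case (Neg a)
  show ?case unfolding sat_g.simps
  proof (intro ballI notI)
    fix q assume q: "q \<in> T" and "sat_g D {q} a"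
    obtain p where p: "p \<in> S" "pair_sim R q p"
      using Neg.prems(4) q unfolding team_sim_def covered_def by blast
    have "sat_g D {p} a"
      using Neg.IH[of "{q}" "{p}"] Neg.prems(1-3) team_sim_singleton[OF p(2)] p(1) q
        \<open>sat_g D {q} a\<close> by auto
    then show False using Neg.prems(5) p(1) by simp
  qed
next
  case (Disj a b)
  obtain S1 S2 where S: "S = S1 \<union> S2" "sat_g D S1 a" "sat_g D S2 b" using Disj.prems(5) by auto
  obtain T1 T2 where T: "T = T1 \<union> T2" "team_sim R S1 T1" "team_sim R S2 T2"
    using team_sim_Un_split Disj.prems(4)[unfolded S(1)] .
  have "wf_fm D R a" "wf_fm D R b" using Disj.prems(1) by simp_all
  moreover have "S1 \<subseteq> const_compat_pairs D R" "S2 \<subseteq> const_compat_pairs D R"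
    "T1 \<subseteq> const_compat_pairs D R" "T2 \<subseteq> const_compat_pairs D R"
    using Disj.prems(2,3) S(1) T(1) by blast+
  ultimately have "sat_g D T1 a" "sat_g D T2 b"
    using Disj.IH(1)[of S1 T1] Disj.IH(2)[of S2 T2] S(2,3) T(2,3) by simp_all
  then show ?case using T(1) by auto
next
  case (Cf xs a)
  have xs: "wf_interv D R xs" using Cf.prems(1) unfolding wf_interv_def by simp
  have ccp: "pair_do D xs ` U \<subseteq> const_compat_pairs D R" if "U \<subseteq> const_compat_pairs D R" for U
    using that pair_do_const_compat[OF sig _ xs] by blast
  show ?case
  proof (cases "consistent xs")
    case True
    have "sat_g D (pair_do D xs ` T) a"
      using Cf.IH[OF _ ccp ccp team_sim_pair_do[OF _ _ _ xs]] Cf.prems True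
      by (simp add: gteam_do_eq_image)
    then show ?thesis by (simp add: gteam_do_eq_image)
  qed simp
next
  case (Conj a b)
  then show ?case by simp
next
  case (GDisj a b)
  then show ?case by auto
qed

definition pairs_of :: "('v, 'a) cteam \<Rightarrow> ('v, 'a) gteam" where
  "pairs_of T = (\<lambda>s. (s, snd T)) ` fst T"

lemma ex_Un_image_Pair_iff:
  "(\<exists>T1 T2. (\<lambda>s. (s, F)) ` A = T1 \<union> T2 \<and> P T1 \<and> Q T2) \<longleftrightarrow>
   (\<exists>S1 S2. S1 \<subseteq> A \<and> S2 \<subseteq> A \<and> S1 \<union> S2 = A \<and> P ((\<lambda>s. (s, F)) ` S1) \<and> Q ((\<lambda>s. (s, F)) ` S2))"
proof
  assume "\<exists>T1 T2. (\<lambda>s. (s, F)) ` A = T1 \<union> T2 \<and> P T1 \<and> Q T2"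
  then obtain T1 T2 where T: "(\<lambda>s. (s, F)) ` A = T1 \<union> T2" "P T1" "Q T2" by blast
  define S1 where "S1 = {s\<in>A. (s, F) \<in> T1}"
  define S2 where "S2 = {s\<in>A. (s, F) \<in> T2}"
  have sub: "T1 \<subseteq> (\<lambda>s. (s, F)) ` A" "T2 \<subseteq> (\<lambda>s. (s, F)) ` A" using T(1) by blast+
  have "(\<lambda>s. (s, F)) ` S1 = T1" "(\<lambda>s. (s, F)) ` S2 = T2"
    unfolding S1_def S2_def using sub by blast+
  moreover have "S1 \<subseteq> A" "S2 \<subseteq> A" "S1 \<union> S2 = A"
    unfolding S1_def S2_def using T(1) by blast+
  ultimately show "\<exists>S1 S2. S1 \<subseteq> A \<and> S2 \<subseteq> A \<and> S1 \<union> S2 = A \<and> P ((\<lambda>s. (s, F)) ` S1) \<and> Q ((\<lambda>s. (s, F)) ` S2)"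
    using T(2,3) by metis
next
  assume "\<exists>S1 S2. S1 \<subseteq> A \<and> S2 \<subseteq> A \<and> S1 \<union> S2 = A \<and> P ((\<lambda>s. (s, F)) ` S1) \<and> Q ((\<lambda>s. (s, F)) ` S2)"
  then show "\<exists>T1 T2. (\<lambda>s. (s, F)) ` A = T1 \<union> T2 \<and> P T1 \<and> Q T2" by (metis image_Un)
qed

lemma sat_c_eq_sat_g: "sat_c D (A, F) \<phi> = sat_g D ((\<lambda>s. (s, F)) ` A) \<phi>"
proof (induction \<phi> arbitrary: A F)
  case (Disj a b)
  have "sat_c D (A, F) (Disj a b) \<longleftrightarrow> (\<exists>S1 S2. S1 \<subseteq> A \<and> S2 \<subseteq> A \<and> S1 \<union> S2 = A
      \<and> sat_g D ((\<lambda>s. (s, F)) ` S1) a \<and> sat_g D ((\<lambda>s. (s, F)) ` S2) b)"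
    using Disj.IH by simp
  then show ?case unfolding sat_g.simps ex_Un_image_Pair_iff .
next
  case (Cf xs a)
  have "gteam_do D xs ((\<lambda>s. (s, F)) ` A) = (\<lambda>s. (s, sys_do xs F)) ` (do_assign D xs F ` A)"
    unfolding gteam_do_def by (simp add: image_image)
  then show ?case using Cf.IH by (simp add: team_do_def)
next
  case (Neg a)
  then show ?case by simp
qed simp_all

lemma sat_c_eq_sat_g_pairs_of: "sat_c D T \<phi> = sat_g D (pairs_of T) \<phi>"
  unfolding pairs_of_def using sat_c_eq_sat_g[of D "fst T" "snd T" \<phi>] by simp

section \<open>Responses\<close>

text \<open>The value of V after intervening on all other variables with w.\<close>

definition response :: "('v, 'a) sysf \<Rightarrow> ('v \<Rightarrow> 'a) \<Rightarrow> 'v \<Rightarrow> ('v \<Rightarrow> 'a) \<Rightarrow> 'a" where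
  "response F s V w = (if V \<in> sf_en F then sf_fn F V (restrict w (sf_pa F V)) else s V)"

definition probes :: "'v set \<Rightarrow> ('v \<Rightarrow> 'a set) \<Rightarrow> ('v \<times> ('v \<Rightarrow> 'a)) set" where
  "probes D R = Sigma D (\<lambda>V. PiE (D - {V}) R)"

lemma response_passive:
  assumes p: "(s, F) \<in> const_compat_pairs D R" and V: "V \<notin> sf_en F - const_vars R F"
    and w: "w \<in> PiE (D - {V}) R"
  shows "response F s V w = s V"
proof (cases "V \<in> sf_en F")
  case True
  then have "restrict w (sf_pa F V) \<in> PiE (sf_pa F V) R"
    using w systems_pa_subset[OF const_compat_pairsD(2)[OF p] True]
    by (auto simp: restrict_PiE_iff intro: PiE_mem)
  moreover have "V \<in> const_vars R F" using True V by blast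
  ultimately show ?thesis using True const_var_fn_eq[OF p] unfolding response_def by simp
qed (simp add: response_def)

lemma response_active_transfer:
  assumes sig: "sig_ok D R"
    and pF: "(s, F) \<in> const_compat_pairs D R" and pG: "(s, G) \<in> const_compat_pairs D R"
    and resp: "\<forall>(V, w)\<in>probes D R. response F s V w = response G s V w"
    and V: "V \<in> sf_en F - const_vars R F"
  shows "V \<in> sf_en G - const_vars R G"
proof (rule ccontr)
  assume G_passive: "V \<notin> sf_en G - const_vars R G"
  have VD: "V \<in> D" using V systems_en_subset[OF const_compat_pairsD(2)[OF pF]] by blast
  have pa: "sf_pa F V \<subseteq> D - {V}" using V systems_pa_subset[OF const_compat_pairsD(2)[OF pF]] by blast
  have ne: "\<forall>U\<in>D - {V}. R U \<noteq> {}" using sig_okD(4)[OF sig] by blast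
  have "sf_fn F V f = s V" if f: "f \<in> PiE (sf_pa F V) R" for f
  proof -
    obtain w where w: "w \<in> PiE (D - {V}) R" "restrict w (sf_pa F V) = f"
      using ex_PiE_extension[OF ne pa pa f f] by blast
    then have "sf_fn F V f = response F s V w" using V unfolding response_def by simp
    also have "\<dots> = response G s V w" using resp VD w(1) unfolding probes_def by blast
    also have "\<dots> = s V" by (rule response_passive[OF pG G_passive w(1)])
    finally show ?thesis .
  qed
  then have "V \<in> const_vars R F" using V unfolding const_vars_def by simp
  then show False using V by blast
qed

lemma sys_sim_iff_response:
  assumes sig: "sig_ok D R"
    and pF: "(s, F) \<in> const_compat_pairs D R" and pG: "(s, G) \<in> const_compat_pairs D R"
  shows "sys_sim R F G \<longleftrightarrow> (\<forall>(V, w)\<in>probes D R. response F s V w = response G s V w)"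
proof -
  have F: "F \<in> systems D R" and G: "G \<in> systems D R"
    using const_compat_pairsD(2) pF pG by blast+
  have ne: "\<forall>U\<in>D - {V}. R U \<noteq> {}" for V using sig_okD(4)[OF sig] by blast
  have fn_sim_iff: "fn_sim R F G V \<longleftrightarrow>
      (\<forall>w\<in>PiE (D - {V}) R. response F s V w = response G s V w)"
    if "V \<in> sf_en F" "V \<in> sf_en G" for V
    using fn_sim_iff_extensions[OF ne systems_pa_subset[OF F] systems_pa_subset[OF G]] that
    unfolding response_def by simp
  show ?thesis
  proof
    assume sim: "sys_sim R F G"
    show "\<forall>(V, w)\<in>probes D R. response F s V w = response G s V w"
    proof (clarsimp simp: probes_def)
      fix V w assume "V \<in> D" "w \<in> PiE (D - {V}) R"
      then show "response F s V w = response G s V w"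
        using sim fn_sim_iff response_passive[OF pF] response_passive[OF pG]
        unfolding sys_sim_def by (metis DiffD1)
    qed
  next
    assume resp: "\<forall>(V, w)\<in>probes D R. response F s V w = response G s V w"
    have resp': "\<forall>(V, w)\<in>probes D R. response G s V w = response F s V w"
      using resp by auto
    have active: "sf_en F - const_vars R F = sf_en G - const_vars R G"
      using response_active_transfer[OF sig pF pG resp] response_active_transfer[OF sig pG pF resp']
      by blast
    have "fn_sim R F G V" if "V \<in> sf_en F - const_vars R F" for V
    proof -
      have "V \<in> D" "V \<in> sf_en F" "V \<in> sf_en G"
        using that active systems_en_subset[OF F] by blast+
      then show ?thesis
        using fn_sim_iff resp unfolding probes_def by simp
    qed
    then show "sys_sim R F G" using active unfolding sys_sim_def by blast
  qed
qed

definition list_of :: "'b set \<Rightarrow> 'b list" where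
  "list_of A = (SOME xs. set xs = A)"

lemma set_list_of: "finite A \<Longrightarrow> set (list_of A) = A"
  unfolding list_of_def by (rule someI_ex) (rule finite_list)

definition set_others :: "'v set \<Rightarrow> 'v \<Rightarrow> ('v \<Rightarrow> 'a) \<Rightarrow> ('v, 'a) interv" where
  "set_others D V w = map (\<lambda>U. (U, w U)) (list_of (D - {V}))"

lemma set_others_consistent: "consistent (set_others D V w)"
  unfolding consistent_def set_others_def by auto

lemma ivars_set_others: "finite D \<Longrightarrow> ivars (set_others D V w) = D - {V}"
  unfolding ivars_def set_others_def by (simp add: set_list_of image_image)

lemma map_of_set_others: "finite D \<Longrightarrow> U \<in> D - {V} \<Longrightarrow> the (map_of (set_others D V w) U) = w U"
  unfolding set_others_def by (simp add: set_list_of map_of_map_restrict)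

lemma wf_interv_set_others:
  assumes "sig_ok D R" "(V, w) \<in> probes D R"
  shows "wf_interv D R (set_others D V w)"
  using assms sig_okD(1)[OF assms(1)] unfolding wf_interv_def set_others_def probes_def
  by (auto simp: set_list_of intro: PiE_mem)

lemma do_assign_set_others:
  assumes sig: "sig_ok D R" and F: "F \<in> systems D R" and s: "s \<in> PiE D R"
    and Vw: "(V, w) \<in> probes D R"
  shows "do_assign D (set_others D V w) F s V = response F s V w"
proof -
  have fin: "finite D" using sig_okD(1)[OF sig] .
  have V: "V \<in> D" and w: "w \<in> PiE (D - {V}) R" using Vw unfolding probes_def by auto
  obtain t where t: "\<forall>U\<in>D - {V}. t U = w U"
    and last: "do_assign D (set_others D V w) F s = do_step (set_others D V w) F s t"
    using do_assign_last_step[OF sig wf_interv_set_others[OF sig Vw] F s]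
    unfolding ivars_set_others[OF fin] using map_of_set_others[OF fin] by metis
  have "restrict t (sf_pa F V) = restrict w (sf_pa F V)" if "V \<in> sf_en F"
    using t systems_pa_subset[OF F that] by (intro restrict_ext) auto
  then show ?thesis
    unfolding last do_step_def response_def ivars_set_others[OF fin] by simp
qed

text \<open>Some equation X = x of the signature is needed to write the tautology as a formula
  over the signature.\<close>

definition fm_top :: "'v set \<Rightarrow> ('v \<Rightarrow> 'a set) \<Rightarrow> ('v, 'a) fm" where
  "fm_top D R = (let X = SOME X. X \<in> D; x = SOME x. x \<in> R X in Neg (Conj (Eq X x) (Neg (Eq X x))))"

definition fm_bot :: "'v set \<Rightarrow> ('v \<Rightarrow> 'a set) \<Rightarrow> ('v, 'a) fm" where
  "fm_bot D R = Neg (fm_top D R)"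

definition Conjs :: "'v set \<Rightarrow> ('v \<Rightarrow> 'a set) \<Rightarrow> ('v, 'a) fm list \<Rightarrow> ('v, 'a) fm" where
  "Conjs D R \<phi>s = foldr Conj \<phi>s (fm_top D R)"

definition Disjs :: "'v set \<Rightarrow> ('v \<Rightarrow> 'a set) \<Rightarrow> ('v, 'a) fm list \<Rightarrow> ('v, 'a) fm" where
  "Disjs D R \<phi>s = foldr Disj \<phi>s (fm_bot D R)"

definition GDisjs :: "'v set \<Rightarrow> ('v \<Rightarrow> 'a set) \<Rightarrow> ('v, 'a) fm list \<Rightarrow> ('v, 'a) fm" where
  "GDisjs D R \<phi>s = foldr GDisj \<phi>s (fm_bot D R)"

lemma sat_g_top: "sat_g D T (fm_top D R)"
  unfolding fm_top_def Let_def by simp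

lemma sat_g_bot: "sat_g D T (fm_bot D R) \<longleftrightarrow> T = {}"
  unfolding fm_bot_def using sat_g_top by auto

lemma sat_g_Conjs: "sat_g D T (Conjs D R \<phi>s) \<longleftrightarrow> (\<forall>\<phi>\<in>set \<phi>s. sat_g D T \<phi>)"
  unfolding Conjs_def by (induction \<phi>s) (simp_all add: sat_g_top)

lemma sat_g_GDisjs: "sat_g D T (GDisjs D R \<phi>s) \<longleftrightarrow> T = {} \<or> (\<exists>\<phi>\<in>set \<phi>s. sat_g D T \<phi>)"
  unfolding GDisjs_def by (induction \<phi>s) (auto simp: sat_g_bot)

lemma wf_fm_top: "sig_ok D R \<Longrightarrow> wf_fm D R (fm_top D R)"
  unfolding fm_top_def Let_def sig_ok_def by (simp add: some_in_eq)

lemma wf_fm_bot: "sig_ok D R \<Longrightarrow> wf_fm D R (fm_bot D R)"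
  unfolding fm_bot_def by (simp add: wf_fm_top)

lemma wf_fm_Conjs: "sig_ok D R \<Longrightarrow> \<forall>\<phi>\<in>set \<phi>s. wf_fm D R \<phi> \<Longrightarrow> wf_fm D R (Conjs D R \<phi>s)"
  unfolding Conjs_def by (induction \<phi>s) (simp_all add: wf_fm_top)

lemma wf_fm_Disjs: "sig_ok D R \<Longrightarrow> \<forall>\<phi>\<in>set \<phi>s. wf_fm D R \<phi> \<Longrightarrow> wf_fm D R (Disjs D R \<phi>s)"
  unfolding Disjs_def by (induction \<phi>s) (simp_all add: wf_fm_bot)

lemma wf_fm_GDisjs: "sig_ok D R \<Longrightarrow> \<forall>\<phi>\<in>set \<phi>s. wf_fm D R \<phi> \<Longrightarrow> wf_fm D R (GDisjs D R \<phi>s)"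
  unfolding GDisjs_def by (induction \<phi>s) (simp_all add: wf_fm_bot)

lemma is_CO_imp: "is_CO \<phi> \<Longrightarrow> is_COsq \<phi> \<and> is_COD \<phi>"
  by (induction \<phi>) auto

lemma is_CO_top: "is_CO (fm_top D R)" and is_CO_bot: "is_CO (fm_bot D R)"
  unfolding fm_bot_def fm_top_def Let_def by simp_all

lemma is_CO_Conjs: "\<forall>\<phi>\<in>set \<phi>s. is_CO \<phi> \<Longrightarrow> is_CO (Conjs D R \<phi>s)"
  unfolding Conjs_def by (induction \<phi>s) (simp_all add: is_CO_top)

lemma is_CO_Disjs: "\<forall>\<phi>\<in>set \<phi>s. is_CO \<phi> \<Longrightarrow> is_CO (Disjs D R \<phi>s)"
  unfolding Disjs_def by (induction \<phi>s) (simp_all add: is_CO_bot)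

lemma is_COD_Conjs: "\<forall>\<phi>\<in>set \<phi>s. is_COD \<phi> \<Longrightarrow> is_COD (Conjs D R \<phi>s)"
  unfolding Conjs_def by (induction \<phi>s) (simp_all add: is_CO_imp is_CO_top)

lemma is_COD_Disjs: "\<forall>\<phi>\<in>set \<phi>s. is_COD \<phi> \<Longrightarrow> is_COD (Disjs D R \<phi>s)"
  unfolding Disjs_def by (induction \<phi>s) (simp_all add: is_CO_imp is_CO_bot)

lemma is_COsq_GDisjs: "\<forall>\<phi>\<in>set \<phi>s. is_COsq \<phi> \<Longrightarrow> is_COsq (GDisjs D R \<phi>s)"
  unfolding GDisjs_def by (induction \<phi>s) (simp_all add: is_CO_imp is_CO_bot)

definition flat :: "'v set \<Rightarrow> ('v, 'a) fm \<Rightarrow> bool" where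
  "flat D \<phi> \<longleftrightarrow> (\<forall>T. sat_g D T \<phi> \<longleftrightarrow> (\<forall>p\<in>T. sat_g D {p} \<phi>))"

lemma flatD: "flat D \<phi> \<Longrightarrow> sat_g D T \<phi> \<longleftrightarrow> (\<forall>p\<in>T. sat_g D {p} \<phi>)"
  unfolding flat_def by blast

lemma sat_g_Disj_flat:
  assumes a: "flat D a" and b: "flat D b"
  shows "sat_g D T (Disj a b) \<longleftrightarrow> (\<forall>p\<in>T. sat_g D {p} a \<or> sat_g D {p} b)"
proof
  assume "sat_g D T (Disj a b)"
  then obtain T1 T2 where "T = T1 \<union> T2" "sat_g D T1 a" "sat_g D T2 b" by auto
  then show "\<forall>p\<in>T. sat_g D {p} a \<or> sat_g D {p} b"
    using flatD[OF a, of T1] flatD[OF b, of T2] by blast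
next
  assume H: "\<forall>p\<in>T. sat_g D {p} a \<or> sat_g D {p} b"
  let ?T1 = "{p\<in>T. sat_g D {p} a}"
  have "sat_g D ?T1 a" using flatD[OF a, of ?T1] by blast
  moreover have "sat_g D (T - ?T1) b" using flatD[OF b, of "T - ?T1"] H by blast
  moreover have "T = ?T1 \<union> (T - ?T1)" by blast
  ultimately show "sat_g D T (Disj a b)" unfolding sat_g.simps by blast
qed

lemma is_CO_flat: "is_CO \<phi> \<Longrightarrow> flat D \<phi>"
proof (induction \<phi>)
  case (Eq X x)
  show ?case unfolding flat_def by simp
next
  case (Neg a)
  show ?case unfolding flat_def by simp
next
  case (Conj a b)
  then have a: "flat D a" and b: "flat D b" by simp_all
  show ?case unfolding flat_def sat_g.simps(4)
  proof
    fix T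
    show "sat_g D T a \<and> sat_g D T b \<longleftrightarrow> (\<forall>p\<in>T. sat_g D {p} a \<and> sat_g D {p} b)"
      using flatD[OF a, of T] flatD[OF b, of T] by blast
  qed
next
  case (Disj a b)
  then have a: "flat D a" and b: "flat D b" by simp_all
  show ?case unfolding flat_def sat_g_Disj_flat[OF a b] by simp
next
  case (Cf xs a)
  then have a: "flat D a" by simp
  have "sat_g D (pair_do D xs ` T) a \<longleftrightarrow> (\<forall>p\<in>T. sat_g D {pair_do D xs p} a)" for T
    using flatD[OF a, of "pair_do D xs ` T"] by blast
  then show ?case unfolding flat_def sat_g.simps(7) gteam_do_eq_image by simp
qed simp_all

lemma sat_g_Disjs_flat:
  assumes "\<forall>\<phi>\<in>set \<phi>s. flat D \<phi>"
  shows "sat_g D T (Disjs D R \<phi>s) \<longleftrightarrow> (\<forall>p\<in>T. \<exists>\<phi>\<in>set \<phi>s. sat_g D {p} \<phi>)"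
  using assms
proof (induction \<phi>s arbitrary: T)
  case Nil
  then show ?case unfolding Disjs_def by (auto simp: sat_g_bot)
next
  case (Cons \<phi> \<phi>s)
  have IH: "sat_g D T (Disjs D R \<phi>s) \<longleftrightarrow> (\<forall>p\<in>T. \<exists>\<phi>\<in>set \<phi>s. sat_g D {p} \<phi>)" for T
    using Cons by simp
  then have "flat D (Disjs D R \<phi>s)" unfolding flat_def by simp
  moreover have "flat D \<phi>" using Cons.prems by simp
  ultimately show ?case
    using sat_g_Disj_flat[of D \<phi> "Disjs D R \<phi>s"] IH unfolding Disjs_def by simp
qed

section \<open>Characteristic formulas\<close>

definition state_fm :: "'v set \<Rightarrow> ('v \<Rightarrow> 'a set) \<Rightarrow> ('v \<Rightarrow> 'a) \<Rightarrow> ('v, 'a) fm" where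
  "state_fm D R s = Conjs D R (map (\<lambda>X. Eq X (s X)) (list_of D))"

definition response_fm :: "'v set \<Rightarrow> ('v \<Rightarrow> 'a set) \<Rightarrow> ('v \<Rightarrow> 'a) \<Rightarrow> ('v, 'a) sysf \<Rightarrow> ('v, 'a) fm" where
  "response_fm D R s F = Conjs D R
     (map (\<lambda>(V, w). Cf (set_others D V w) (Eq V (response F s V w))) (list_of (probes D R)))"

definition char_fm :: "'v set \<Rightarrow> ('v \<Rightarrow> 'a set) \<Rightarrow> ('v \<Rightarrow> 'a) \<times> ('v, 'a) sysf \<Rightarrow> ('v, 'a) fm" where
  "char_fm D R p = Conj (state_fm D R (fst p)) (response_fm D R (fst p) (snd p))"

definition sim_fm :: "'v set \<Rightarrow> ('v \<Rightarrow> 'a set) \<Rightarrow> ('v, 'a) fm" where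
  "sim_fm D R = Conj (Conjs D R (map (\<lambda>X. Dep [] X) (list_of D)))
     (Conjs D R (map (\<lambda>(V, w). Cf (set_others D V w) (Dep [] V)) (list_of (probes D R))))"

lemma finite_probes: "sig_ok D R \<Longrightarrow> finite (probes D R)"
  unfolding probes_def using sig_okD[of D R] by (auto intro!: finite_PiE)

lemma response_in:
  assumes "F \<in> systems D R" "s \<in> PiE D R" "(V, w) \<in> probes D R"
  shows "response F s V w \<in> R V"
proof (cases "V \<in> sf_en F")
  case True
  then have "restrict w (sf_pa F V) \<in> PiE (sf_pa F V) R"
    using assms(3) systems_pa_subset[OF assms(1) True] unfolding probes_def
    by (auto simp: restrict_PiE_iff intro: PiE_mem)
  then show ?thesis using systems_fn_in[OF assms(1) True] True unfolding response_def by simp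
qed (use assms(2,3) in \<open>auto simp: response_def probes_def intro: PiE_mem\<close>)

lemma fst_pair_do_set_others:
  assumes sig: "sig_ok D R" and q: "q \<in> const_compat_pairs D R" and Vw: "(V, w) \<in> probes D R"
  shows "fst (pair_do D (set_others D V w) q) V = response (snd q) (fst q) V w"
proof -
  obtain s F where qe: "q = (s, F)" by fastforce
  show ?thesis
    using do_assign_set_others[OF sig const_compat_pairsD(2,1)[OF q[unfolded qe]] Vw]
    unfolding qe pair_do_def by simp
qed

lemma sat_g_Cf_set_others:
  assumes sig: "sig_ok D R" and T: "T \<subseteq> const_compat_pairs D R" and Vw: "(V, w) \<in> probes D R"
  shows "sat_g D T (Cf (set_others D V w) (Eq V c)) \<longleftrightarrow>
      (\<forall>q\<in>T. response (snd q) (fst q) V w = c)"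
    and "sat_g D T (Cf (set_others D V w) (Dep [] V)) \<longleftrightarrow>
      (\<forall>q\<in>T. \<forall>q'\<in>T. response (snd q) (fst q) V w = response (snd q') (fst q') V w)"
proof -
  have val: "fst (pair_do D (set_others D V w) q) V = response (snd q) (fst q) V w" if "q \<in> T" for q
    using fst_pair_do_set_others[OF sig _ Vw] that T by blast
  show "sat_g D T (Cf (set_others D V w) (Eq V c)) \<longleftrightarrow>
      (\<forall>q\<in>T. response (snd q) (fst q) V w = c)"
    using val by (simp add: set_others_consistent gteam_do_eq_image)
  show "sat_g D T (Cf (set_others D V w) (Dep [] V)) \<longleftrightarrow>
      (\<forall>q\<in>T. \<forall>q'\<in>T. response (snd q) (fst q) V w = response (snd q') (fst q') V w)"
    using val by (simp add: set_others_consistent gteam_do_eq_image)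
qed

lemma sat_g_Conjs_probes:
  assumes sig: "sig_ok D R"
    and f: "\<And>V w. (V, w) \<in> probes D R \<Longrightarrow> sat_g D T (f V w) \<longleftrightarrow> P V w"
  shows "sat_g D T (Conjs D R (map (\<lambda>(V, w). f V w) (list_of (probes D R))))
    \<longleftrightarrow> (\<forall>(V, w)\<in>probes D R. P V w)"
proof -
  have "sat_g D T (Conjs D R (map (\<lambda>(V, w). f V w) (list_of (probes D R))))
      \<longleftrightarrow> (\<forall>(V, w)\<in>probes D R. sat_g D T (f V w))"
    unfolding sat_g_Conjs set_map set_list_of[OF finite_probes[OF sig]] by (auto simp del: sat_g.simps)
  also have "\<dots> \<longleftrightarrow> (\<forall>(V, w)\<in>probes D R. P V w)"
  proof (rule ball_cong[OF refl])
    fix x assume x: "x \<in> probes D R"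
    obtain V w where xe: "x = (V, w)" by fastforce
    show "(case x of (V, w) \<Rightarrow> sat_g D T (f V w)) \<longleftrightarrow> (case x of (V, w) \<Rightarrow> P V w)"
      using f x unfolding xe by simp
  qed
  finally show ?thesis .
qed

lemma sat_g_state_fm:
  "sig_ok D R \<Longrightarrow> sat_g D T (state_fm D R s) \<longleftrightarrow> (\<forall>q\<in>T. \<forall>X\<in>D. fst q X = s X)"
  unfolding state_fm_def sat_g_Conjs by (auto simp: set_list_of sig_okD(1))

lemma sat_g_response_fm:
  assumes sig: "sig_ok D R" and T: "T \<subseteq> const_compat_pairs D R"
  shows "sat_g D T (response_fm D R s F) \<longleftrightarrow>
    (\<forall>q\<in>T. \<forall>(V, w)\<in>probes D R. response (snd q) (fst q) V w = response F s V w)"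
proof -
  have "sat_g D T (response_fm D R s F) \<longleftrightarrow>
      (\<forall>(V, w)\<in>probes D R. \<forall>q\<in>T. response (snd q) (fst q) V w = response F s V w)"
    unfolding response_fm_def using sat_g_Cf_set_others(1)[OF sig T] by (rule sat_g_Conjs_probes[OF sig])
  then show ?thesis by fast
qed

lemma pair_sim_iff_observations:
  assumes sig: "sig_ok D R" and p: "p \<in> const_compat_pairs D R" and q: "q \<in> const_compat_pairs D R"
  shows "pair_sim R p q \<longleftrightarrow> (\<forall>X\<in>D. fst p X = fst q X) \<and>
    (\<forall>(V, w)\<in>probes D R. response (snd p) (fst p) V w = response (snd q) (fst q) V w)"
proof -
  obtain s F t G where pq: "p = (s, F)" "q = (t, G)" by fastforce
  have "s \<in> PiE D R" "t \<in> PiE D R" using const_compat_pairsD(1) p q unfolding pq by blast+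
  then have st: "s = t \<longleftrightarrow> (\<forall>X\<in>D. s X = t X)" by (auto intro: PiE_ext)
  show ?thesis
  proof (cases "s = t")
    case True
    then show ?thesis
      using sys_sim_iff_response[OF sig, of s F G] p q unfolding pair_sim_def pq by simp
  next
    case False
    then have "\<not> (\<forall>X\<in>D. s X = t X)" using st by blast
    then show ?thesis using False unfolding pair_sim_def pq by simp
  qed
qed

lemma sat_g_char_fm:
  assumes sig: "sig_ok D R" and T: "T \<subseteq> const_compat_pairs D R" and p: "p \<in> const_compat_pairs D R"
  shows "sat_g D T (char_fm D R p) \<longleftrightarrow> (\<forall>q\<in>T. pair_sim R q p)"
  unfolding char_fm_def sat_g.simps(4) sat_g_state_fm[OF sig] sat_g_response_fm[OF sig T]
  using pair_sim_iff_observations[OF sig _ p] T by blast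

lemma sat_g_sim_fm:
  assumes sig: "sig_ok D R" and T: "T \<subseteq> const_compat_pairs D R"
  shows "sat_g D T (sim_fm D R) \<longleftrightarrow> (\<forall>q\<in>T. \<forall>q'\<in>T. pair_sim R q q')"
proof -
  let ?resp = "\<lambda>q V w. response (snd q) (fst q) V w"
  have "sat_g D T (Conjs D R (map (\<lambda>X. Dep [] X) (list_of D)))
      \<longleftrightarrow> (\<forall>q\<in>T. \<forall>q'\<in>T. \<forall>X\<in>D. fst q X = fst q' X)"
    unfolding sat_g_Conjs set_map set_list_of[OF sig_okD(1)[OF sig]] by auto
  moreover have "sat_g D T (Conjs D R (map (\<lambda>(V, w). Cf (set_others D V w) (Dep [] V)) (list_of (probes D R))))
      \<longleftrightarrow> (\<forall>(V, w)\<in>probes D R. \<forall>q\<in>T. \<forall>q'\<in>T. ?resp q V w = ?resp q' V w)"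
    using sat_g_Cf_set_others(2)[OF sig T] by (rule sat_g_Conjs_probes[OF sig])
  then have "sat_g D T (Conjs D R (map (\<lambda>(V, w). Cf (set_others D V w) (Dep [] V)) (list_of (probes D R))))
      \<longleftrightarrow> (\<forall>q\<in>T. \<forall>q'\<in>T. \<forall>(V, w)\<in>probes D R. ?resp q V w = ?resp q' V w)"
    by fast
  moreover have "pair_sim R q q' \<longleftrightarrow> (\<forall>X\<in>D. fst q X = fst q' X) \<and>
      (\<forall>(V, w)\<in>probes D R. ?resp q V w = ?resp q' V w)" if "q \<in> T" "q' \<in> T" for q q'
  proof -
    have "q \<in> const_compat_pairs D R" "q' \<in> const_compat_pairs D R" using T that by blast+
    then show ?thesis by (rule pair_sim_iff_observations[OF sig])
  qed
  ultimately show ?thesis unfolding sim_fm_def sat_g.simps(4) by blast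
qed

lemma is_CO_char_fm: "is_CO (char_fm D R p)"
  unfolding char_fm_def state_fm_def response_fm_def by (auto intro!: is_CO_Conjs)

lemma is_COD_sim_fm: "is_COD (sim_fm D R)"
  unfolding sim_fm_def by (auto intro!: is_COD_Conjs)

lemma wf_fm_char_fm:
  assumes sig: "sig_ok D R" and p: "p \<in> const_compat_pairs D R"
  shows "wf_fm D R (char_fm D R p)"
proof -
  obtain s F where pe: "p = (s, F)" by fastforce
  note s = const_compat_pairsD(1)[OF p[unfolded pe]] and F = const_compat_pairsD(2)[OF p[unfolded pe]]
  have fin: "finite D" by (rule sig_okD(1)[OF sig])
  have "wf_fm D R (state_fm D R s)"
    unfolding state_fm_def using PiE_mem[OF s] by (intro wf_fm_Conjs[OF sig]) (auto simp: set_list_of[OF fin])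
  moreover have "wf_fm D R (response_fm D R s F)"
    unfolding response_fm_def
  proof (intro wf_fm_Conjs[OF sig] ballI)
    fix \<phi> assume "\<phi> \<in> set (map (\<lambda>(V, w). Cf (set_others D V w) (Eq V (response F s V w))) (list_of (probes D R)))"
    then obtain V w where Vw: "(V, w) \<in> probes D R" and \<phi>: "\<phi> = Cf (set_others D V w) (Eq V (response F s V w))"
      using set_list_of[OF finite_probes[OF sig]] by auto
    have "V \<in> D" using Vw unfolding probes_def by blast
    then show "wf_fm D R \<phi>"
      unfolding \<phi> using wf_interv_set_others[OF sig Vw] response_in[OF F s Vw]
      by (simp add: wf_interv_def)
  qed
  ultimately show ?thesis unfolding char_fm_def pe by simp
qed

lemma wf_fm_sim_fm:
  assumes sig: "sig_ok D R"
  shows "wf_fm D R (sim_fm D R)"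
proof -
  have fin: "finite D" by (rule sig_okD(1)[OF sig])
  have "wf_fm D R (Cf (set_others D V w) (Dep [] V))" if Vw: "(V, w) \<in> probes D R" for V w
    using wf_interv_set_others[OF sig Vw] Vw unfolding probes_def by (simp add: wf_interv_def)
  then show ?thesis
    unfolding sim_fm_def using set_list_of[OF finite_probes[OF sig]]
    by (auto simp: set_list_of[OF fin] intro!: wf_fm_Conjs[OF sig])
qed

lemma finite_systems:
  assumes sig: "sig_ok D R"
  shows "finite (systems D R)"
proof -
  let ?mk = "\<lambda>(e, pa, fn). \<lparr>sf_en = e, sf_pa = \<lambda>V. if V \<in> D then pa V else {},
      sf_fn = \<lambda>V. if V \<in> D then fn V else (\<lambda>_. undefined)\<rparr>"
  let ?A = "Pow D \<times> PiE D (\<lambda>_. Pow D)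
      \<times> PiE D (\<lambda>V. insert (\<lambda>_. undefined) (\<Union>P\<in>Pow D. PiE (PiE P R) (\<lambda>_. R V)))"
  have "systems D R \<subseteq> ?mk ` ?A"
  proof
    fix F assume F: "F \<in> systems D R"
    let ?x = "(sf_en F, restrict (sf_pa F) D, restrict (sf_fn F) D)"
    have outside: "sf_pa F V = {}" "sf_fn F V = (\<lambda>_. undefined)" if "V \<notin> D" for V
      using that systems_en_subset[OF F] systems_outside[OF F] by auto
    have "?mk ?x = F"
      by (rule sysf.equality) (auto simp: fun_eq_iff outside)
    moreover have "sf_pa F V \<in> Pow D \<and>
        sf_fn F V \<in> insert (\<lambda>_. undefined) (\<Union>P\<in>Pow D. PiE (PiE P R) (\<lambda>_. R V))" if "V \<in> D" for V
    proof (cases "V \<in> sf_en F")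
      case True
      have "sf_pa F V \<in> Pow D" using systems_pa_subset[OF F True] by blast
      moreover have "sf_fn F V \<in> (\<Union>P\<in>Pow D. PiE (PiE P R) (\<lambda>_. R V))"
        using systems_fn_PiE[OF F True] calculation by (rule UN_I[rotated])
      ultimately show ?thesis by simp
    qed (use systems_outside[OF F] in simp)
    then have "?x \<in> ?A"
      using systems_en_subset[OF F] by (simp add: restrict_PiE_iff)
    ultimately show "F \<in> ?mk ` ?A" by (rule image_eqI[OF sym])
  qed
  moreover have "finite ?A"
    using sig_okD(1,3)[OF sig]
    by (intro finite_cartesian_product finite_PiE finite_insert[THEN iffD2] finite_UN_I)
      (auto intro: finite_subset)
  ultimately show ?thesis by (rule finite_subset[OF _ finite_imageI])
qed

lemma finite_compat_pairs: "sig_ok D R \<Longrightarrow> finite (compat_pairs D R)"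
proof -
  assume sig: "sig_ok D R"
  have "compat_pairs D R \<subseteq> PiE D R \<times> systems D R"
    unfolding compat_pairs_def assigns_def by auto
  moreover have "finite (PiE D R)" using sig_okD[OF sig] by (intro finite_PiE) auto
  ultimately show ?thesis using finite_systems[OF sig] by (meson finite_SigmaI finite_subset)
qed

definition cover_fm :: "'v set \<Rightarrow> ('v \<Rightarrow> 'a set) \<Rightarrow> ('v, 'a) gteam \<Rightarrow> ('v, 'a) fm" where
  "cover_fm D R P = Disjs D R (map (char_fm D R) (list_of P))"

lemma sat_g_cover_fm:
  assumes sig: "sig_ok D R" and Y: "Y \<subseteq> const_compat_pairs D R"
    and P: "P \<subseteq> const_compat_pairs D R" "finite P"
  shows "sat_g D Y (cover_fm D R P) \<longleftrightarrow> covered R Y P"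
proof -
  have "\<forall>\<phi>\<in>set (map (char_fm D R) (list_of P)). flat D \<phi>"
    by (auto intro: is_CO_flat is_CO_char_fm)
  then have "sat_g D Y (cover_fm D R P) \<longleftrightarrow>
      (\<forall>q\<in>Y. \<exists>\<phi>\<in>set (map (char_fm D R) (list_of P)). sat_g D {q} \<phi>)"
    unfolding cover_fm_def by (rule sat_g_Disjs_flat)
  also have "\<dots> \<longleftrightarrow> (\<forall>q\<in>Y. \<exists>p\<in>P. sat_g D {q} (char_fm D R p))"
    by (simp del: sat_g.simps add: set_list_of[OF P(2)])
  also have "\<dots> \<longleftrightarrow> covered R Y P"
  proof -
    have "sat_g D {q} (char_fm D R p) \<longleftrightarrow> pair_sim R q p" if "q \<in> Y" "p \<in> P" for q p
      using sat_g_char_fm[OF sig, of "{q}" p] Y P(1) that by auto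
    then show ?thesis unfolding covered_def by blast
  qed
  finally show ?thesis .
qed

lemma is_CO_cover_fm: "is_CO (cover_fm D R P)"
  unfolding cover_fm_def using is_CO_char_fm by (auto intro!: is_CO_Disjs)

lemma wf_fm_cover_fm:
  assumes "sig_ok D R" "P \<subseteq> const_compat_pairs D R" "finite P"
  shows "wf_fm D R (cover_fm D R P)"
proof -
  have "\<forall>p\<in>P. wf_fm D R (char_fm D R p)" using assms(1,2) wf_fm_char_fm by blast
  then show ?thesis
    unfolding cover_fm_def using set_list_of[OF assms(3)] by (simp add: wf_fm_Disjs[OF assms(1)])
qed

definition classes_fm :: "'v set \<Rightarrow> ('v \<Rightarrow> 'a set) \<Rightarrow> nat \<Rightarrow> ('v, 'a) fm" where
  "classes_fm D R n = Disjs D R (replicate n (sim_fm D R))"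

definition coverable :: "'v set \<Rightarrow> ('v \<Rightarrow> 'a set) \<Rightarrow> nat \<Rightarrow> ('v, 'a) gteam \<Rightarrow> bool" where
  "coverable D R n Y \<longleftrightarrow> (\<exists>Z\<subseteq>const_compat_pairs D R. finite Z \<and> card Z \<le> n \<and> covered R Y Z)"

lemma coverable_0: "coverable D R 0 Y \<longleftrightarrow> Y = {}"
  unfolding coverable_def covered_def by auto

lemma coverable_empty: "coverable D R n {}"
  unfolding coverable_def covered_def by auto

lemma coverable_Suc_iff:
  assumes sig: "sig_ok D R" and Y: "Y \<subseteq> const_compat_pairs D R"
  shows "coverable D R (Suc n) Y \<longleftrightarrow>
    (\<exists>T1 T2. Y = T1 \<union> T2 \<and> (\<forall>q\<in>T1. \<forall>q'\<in>T1. pair_sim R q q') \<and> coverable D R n T2)"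
proof
  assume "coverable D R (Suc n) Y"
  then obtain Z where Z: "Z \<subseteq> const_compat_pairs D R" "finite Z" "card Z \<le> Suc n" "covered R Y Z"
    unfolding coverable_def by blast
  show "\<exists>T1 T2. Y = T1 \<union> T2 \<and> (\<forall>q\<in>T1. \<forall>q'\<in>T1. pair_sim R q q') \<and> coverable D R n T2"
  proof (cases "Z = {}")
    case True
    then have "Y = {} \<union> {}" using Z(4) unfolding covered_def by blast
    then show ?thesis using coverable_empty by blast
  next
    case False
    then obtain z where z: "z \<in> Z" by blast
    define T1 where "T1 = {q\<in>Y. pair_sim R q z}"
    have "\<forall>q\<in>T1. \<forall>q'\<in>T1. pair_sim R q q'"
    proof (intro ballI)
      fix q q' assume "q \<in> T1" "q' \<in> T1"
      then have "q \<in> Y" "q' \<in> Y" "pair_sim R q z" "pair_sim R z q'"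
        unfolding T1_def using pair_sim_sym by blast+
      then show "pair_sim R q q'" using pair_sim_trans[OF sig] Y z Z(1) by blast
    qed
    moreover have "covered R (Y - T1) (Z - {z})"
      using Z(4) unfolding covered_def T1_def by blast
    then have "coverable D R n (Y - T1)"
      unfolding coverable_def using Z z by (intro exI[of _ "Z - {z}"]) auto
    moreover have "Y = T1 \<union> (Y - T1)" unfolding T1_def by blast
    ultimately show ?thesis by blast
  qed
next
  assume "\<exists>T1 T2. Y = T1 \<union> T2 \<and> (\<forall>q\<in>T1. \<forall>q'\<in>T1. pair_sim R q q') \<and> coverable D R n T2"
  then obtain T1 T2 Z where Y12: "Y = T1 \<union> T2" and T1: "\<forall>q\<in>T1. \<forall>q'\<in>T1. pair_sim R q q'"
    and Z: "Z \<subseteq> const_compat_pairs D R" "finite Z" "card Z \<le> n" "covered R T2 Z"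
    unfolding coverable_def by blast
  show "coverable D R (Suc n) Y"
  proof (cases "T1 = {}")
    case True
    then show ?thesis using Z Y12 unfolding coverable_def by (intro exI[of _ Z]) auto
  next
    case False
    then obtain t where t: "t \<in> T1" by blast
    have "covered R Y (insert t Z)" using T1 t Z(4) Y12 unfolding covered_def by blast
    moreover have "card (insert t Z) \<le> Suc n" using Z(2,3) by (simp add: card_insert_if)
    ultimately show ?thesis
      using Z(1,2) t Y Y12 unfolding coverable_def by (intro exI[of _ "insert t Z"]) auto
  qed
qed

lemma sat_g_classes_fm:
  assumes sig: "sig_ok D R"
  shows "Y \<subseteq> const_compat_pairs D R \<Longrightarrow> sat_g D Y (classes_fm D R n) \<longleftrightarrow> coverable D R n Y"
proof (induction n arbitrary: Y)
  case 0
  then show ?case unfolding classes_fm_def Disjs_def coverable_0 by (simp add: sat_g_bot)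
next
  case (Suc n)
  have "sat_g D Y (classes_fm D R (Suc n)) \<longleftrightarrow>
      (\<exists>T1 T2. Y = T1 \<union> T2 \<and> sat_g D T1 (sim_fm D R) \<and> sat_g D T2 (classes_fm D R n))"
    unfolding classes_fm_def Disjs_def by simp
  also have "\<dots> \<longleftrightarrow>
      (\<exists>T1 T2. Y = T1 \<union> T2 \<and> (\<forall>q\<in>T1. \<forall>q'\<in>T1. pair_sim R q q') \<and> coverable D R n T2)"
  proof -
    have sim: "sat_g D T (sim_fm D R) \<longleftrightarrow> (\<forall>q\<in>T. \<forall>q'\<in>T. pair_sim R q q')"
      and cls: "sat_g D T (classes_fm D R n) \<longleftrightarrow> coverable D R n T" if "T \<subseteq> Y" for T
      using sat_g_sim_fm[OF sig] Suc.IH subset_trans[OF that Suc.prems] by blast+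
    show ?thesis
    proof (intro iffI; elim exE conjE)
      fix T1 T2 assume "Y = T1 \<union> T2" "sat_g D T1 (sim_fm D R)" "sat_g D T2 (classes_fm D R n)"
      then show "\<exists>T1 T2. Y = T1 \<union> T2 \<and> (\<forall>q\<in>T1. \<forall>q'\<in>T1. pair_sim R q q') \<and> coverable D R n T2"
        using sim[of T1] cls[of T2] by blast
    next
      fix T1 T2 assume "Y = T1 \<union> T2" "\<forall>q\<in>T1. \<forall>q'\<in>T1. pair_sim R q q'" "coverable D R n T2"
      then show "\<exists>T1 T2. Y = T1 \<union> T2 \<and> sat_g D T1 (sim_fm D R) \<and> sat_g D T2 (classes_fm D R n)"
        using sim[of T1] cls[of T2] by blast
    qed
  qed
  also have "\<dots> \<longleftrightarrow> coverable D R (Suc n) Y" using coverable_Suc_iff[OF sig Suc.prems] by simp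
  finally show ?case .
qed

lemma is_COD_classes_fm: "is_COD (classes_fm D R n)"
  unfolding classes_fm_def using is_COD_sim_fm by (auto intro!: is_COD_Disjs)

lemma wf_fm_classes_fm: "sig_ok D R \<Longrightarrow> wf_fm D R (classes_fm D R n)"
  unfolding classes_fm_def using wf_fm_sim_fm by (auto intro!: wf_fm_Disjs)

definition reduced :: "('v \<Rightarrow> 'a set) \<Rightarrow> ('v, 'a) gteam \<Rightarrow> bool" where
  "reduced R X \<longleftrightarrow> (\<forall>p\<in>X. \<forall>p'\<in>X. pair_sim R p p' \<longrightarrow> p = p')"

lemma card_le_if_covered:
  assumes sig: "sig_ok D R" and X: "X \<subseteq> const_compat_pairs D R" "reduced R X"
    and Z: "Z \<subseteq> const_compat_pairs D R" "finite Z" and cov: "covered R X Z"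
  shows "card X \<le> card Z"
proof -
  define f where "f p = (SOME z. z \<in> Z \<and> pair_sim R p z)" for p
  have f: "f p \<in> Z \<and> pair_sim R p (f p)" if "p \<in> X" for p
  proof -
    have "\<exists>z. z \<in> Z \<and> pair_sim R p z" using cov that unfolding covered_def by blast
    then show ?thesis unfolding f_def by (rule someI_ex)
  qed
  have "inj_on f X"
  proof
    fix p p' assume p: "p \<in> X" "p' \<in> X" and eq: "f p = f p'"
    have "pair_sim R p (f p')" using f[OF p(1)] eq by simp
    moreover have "pair_sim R (f p') p'" using f[OF p(2)] pair_sim_sym by blast
    ultimately have "pair_sim R p p'"
      using pair_sim_trans[OF sig] f[OF p(2)] p X(1) Z(1) by blast
    then show "p = p'" using X(2) p unfolding reduced_def by blast
  qed
  moreover have "f ` X \<subseteq> Z" using f by blast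
  ultimately show ?thesis using Z(2) by (rule card_inj_on_le)
qed

text \<open>Y splits into a part meeting fewer than card X similarity classes and a part with no
  counterpart in X; for reduced X this says that some element of X has no counterpart in Y.\<close>

definition uncovered_fm :: "'v set \<Rightarrow> ('v \<Rightarrow> 'a set) \<Rightarrow> ('v, 'a) gteam \<Rightarrow> ('v, 'a) fm" where
  "uncovered_fm D R X = Disj (classes_fm D R (card X - 1))
     (cover_fm D R {p \<in> compat_pairs D R. \<not> (\<exists>x\<in>X. pair_sim R p x)})"

lemma sat_g_cover_fm_unrelated:
  assumes sig: "sig_ok D R" and Y: "Y \<subseteq> compat_pairs D R" and X: "X \<subseteq> const_compat_pairs D R"
  shows "sat_g D Y (cover_fm D R {p \<in> compat_pairs D R. \<not> (\<exists>x\<in>X. pair_sim R p x)})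
    \<longleftrightarrow> (\<forall>q\<in>Y. \<not> (\<exists>x\<in>X. pair_sim R q x))"
proof -
  let ?P = "{p \<in> compat_pairs D R. \<not> (\<exists>x\<in>X. pair_sim R p x)}"
  have P: "?P \<subseteq> const_compat_pairs D R" using compat_pairs_subset by blast
  have "finite ?P" using finite_compat_pairs[OF sig] by simp
  then have "sat_g D Y (cover_fm D R ?P) \<longleftrightarrow> covered R Y ?P"
    using sat_g_cover_fm[OF sig subset_trans[OF Y compat_pairs_subset] P] by blast
  also have "\<dots> \<longleftrightarrow> (\<forall>q\<in>Y. \<not> (\<exists>x\<in>X. pair_sim R q x))"
    unfolding covered_def
  proof (intro ball_cong[OF refl] iffI)
    fix q assume q: "q \<in> Y" and "\<exists>p\<in>?P. pair_sim R q p"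
    then obtain p where p: "p \<in> ?P" "pair_sim R q p" by blast
    show "\<not> (\<exists>x\<in>X. pair_sim R q x)"
    proof
      assume "\<exists>x\<in>X. pair_sim R q x"
      then obtain x where x: "x \<in> X" "pair_sim R q x" by blast
      have "p \<in> const_compat_pairs D R" "q \<in> const_compat_pairs D R" "x \<in> const_compat_pairs D R"
        using p(1) P q Y compat_pairs_subset x(1) X by blast+
      then have "pair_sim R p x" using pair_sim_trans[OF sig _ _ _ pair_sim_sym[OF p(2)] x(2)] by blast
      then show False using p(1) x(1) by blast
    qed
  next
    fix q assume "q \<in> Y" "\<not> (\<exists>x\<in>X. pair_sim R q x)"
    then show "\<exists>p\<in>?P. pair_sim R q p" using Y pair_sim_refl by blast
  qed
  finally show ?thesis .
qed

lemma sat_g_uncovered_fm: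
  assumes sig: "sig_ok D R" and Y: "Y \<subseteq> compat_pairs D R" and X: "X \<subseteq> compat_pairs D R"
    and "X \<noteq> {}" "reduced R X"
  shows "sat_g D Y (uncovered_fm D R X) \<longleftrightarrow> \<not> covered R X Y"
proof -
  have Yc: "Y \<subseteq> const_compat_pairs D R" and Xc: "X \<subseteq> const_compat_pairs D R"
    using Y X compat_pairs_subset by blast+
  have finX: "finite X" using X finite_compat_pairs[OF sig] finite_subset by blast
  note split = sat_g_classes_fm[OF sig] sat_g_cover_fm_unrelated[OF sig _ Xc]
  show ?thesis
  proof
    assume "sat_g D Y (uncovered_fm D R X)"
    then obtain Y1 Y2 where Ys: "Y = Y1 \<union> Y2" and Y1: "sat_g D Y1 (classes_fm D R (card X - 1))"
      and Y2: "sat_g D Y2 (cover_fm D R {p \<in> compat_pairs D R. \<not> (\<exists>x\<in>X. pair_sim R p x)})"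
      unfolding uncovered_fm_def by auto
    obtain Z where Z: "Z \<subseteq> const_compat_pairs D R" "finite Z" "card Z \<le> card X - 1" "covered R Y1 Z"
      using Y1 split(1)[of Y1] Ys Yc unfolding coverable_def by blast
    have unrelated: "\<forall>q\<in>Y2. \<not> (\<exists>x\<in>X. pair_sim R q x)" using Y2 split(2)[of Y2] Ys Y by blast
    show "\<not> covered R X Y"
    proof
      assume "covered R X Y"
      then have "covered R X Y1" using unrelated Ys pair_sim_sym unfolding covered_def by blast
      then have "covered R X Z" using covered_trans[OF sig Xc _ Z(1)] Z(4) Ys Yc by blast
      then have "card X \<le> card Z" using card_le_if_covered[OF sig Xc \<open>reduced R X\<close> Z(1,2)] by blast
      moreover have "card X > 0" using \<open>X \<noteq> {}\<close> finX by (simp add: card_gt_0_iff)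
      ultimately show False using Z(3) by linarith
    qed
  next
    assume "\<not> covered R X Y"
    then obtain x0 where x0: "x0 \<in> X" "\<forall>q\<in>Y. \<not> pair_sim R x0 q" unfolding covered_def by blast
    define Y1 where "Y1 = {q\<in>Y. \<exists>x\<in>X. pair_sim R q x}"
    have "covered R Y1 (X - {x0})"
      using x0(2) pair_sim_sym unfolding Y1_def covered_def by blast
    moreover have "card (X - {x0}) \<le> card X - 1" using x0(1) finX by simp
    ultimately have "sat_g D Y1 (classes_fm D R (card X - 1))"
      using split(1)[of Y1] Xc finX Yc unfolding Y1_def coverable_def by blast
    moreover have "sat_g D (Y - Y1) (cover_fm D R {p \<in> compat_pairs D R. \<not> (\<exists>x\<in>X. pair_sim R p x)})"
      using split(2)[of "Y - Y1"] Y unfolding Y1_def by blast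
    moreover have "Y = Y1 \<union> (Y - Y1)" unfolding Y1_def by blast
    ultimately show "sat_g D Y (uncovered_fm D R X)" unfolding uncovered_fm_def sat_g.simps by blast
  qed
qed

lemma is_COD_uncovered_fm: "is_COD (uncovered_fm D R X)"
  unfolding uncovered_fm_def by (simp add: is_COD_classes_fm is_CO_imp[OF is_CO_cover_fm])

lemma wf_fm_uncovered_fm:
  assumes sig: "sig_ok D R"
  shows "wf_fm D R (uncovered_fm D R X)"
proof -
  have "{p \<in> compat_pairs D R. \<not> (\<exists>x\<in>X. pair_sim R p x)} \<subseteq> const_compat_pairs D R"
    "finite {p \<in> compat_pairs D R. \<not> (\<exists>x\<in>X. pair_sim R p x)}"
    using compat_pairs_subset finite_compat_pairs[OF sig] by auto
  then show ?thesis
    unfolding uncovered_fm_def using wf_fm_classes_fm[OF sig] wf_fm_cover_fm[OF sig] by simp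
qed

section \<open>Defining the closure of a class of teams\<close>

lemma ex_representatives:
  assumes refl: "\<forall>x\<in>A. r x x" and sym: "\<forall>x\<in>A. \<forall>y\<in>A. r x y \<longrightarrow> r y x"
    and trans: "\<forall>x\<in>A. \<forall>y\<in>A. \<forall>z\<in>A. r x y \<longrightarrow> r y z \<longrightarrow> r x z"
  shows "\<exists>B\<subseteq>A. (\<forall>x\<in>A. \<exists>y\<in>B. r x y) \<and> (\<forall>x\<in>B. \<forall>y\<in>B. r x y \<longrightarrow> x = y)"
proof -
  define rep where "rep x = (SOME y. y \<in> A \<and> r x y)" for x
  have rep: "rep x \<in> A \<and> r x (rep x)" if "x \<in> A" for x
    unfolding rep_def using refl that by (metis (mono_tags, lifting) someI_ex)
  have rep_eq: "rep x = rep y" if "x \<in> A" "y \<in> A" "r x y" for x y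
  proof -
    have "(\<lambda>z. z \<in> A \<and> r x z) = (\<lambda>z. z \<in> A \<and> r y z)"
      using that sym trans by blast
    then show ?thesis unfolding rep_def by simp
  qed
  have "\<forall>x\<in>rep ` A. \<forall>y\<in>rep ` A. r x y \<longrightarrow> x = y"
  proof (intro ballI impI)
    fix x' y' assume "x' \<in> rep ` A" "y' \<in> rep ` A" and "r x' y'"
    then obtain x y where "x \<in> A" "y \<in> A" "x' = rep x" "y' = rep y" by blast
    then have "r x y" using rep \<open>r x' y'\<close> sym trans by metis
    then show "x' = y'" using rep_eq \<open>x \<in> A\<close> \<open>y \<in> A\<close> \<open>x' = rep x\<close> \<open>y' = rep y\<close> by blast
  qed
  then show ?thesis using rep by (intro exI[of _ "rep ` A"]) blast
qed

lemma ex_reduced_cover: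
  assumes sig: "sig_ok D R" and Y: "Y \<subseteq> const_compat_pairs D R"
  obtains X where "X \<subseteq> Y" "reduced R X" "covered R Y X"
proof -
  have "\<forall>x\<in>Y. pair_sim R x x" by (simp add: pair_sim_refl)
  moreover have "\<forall>x\<in>Y. \<forall>y\<in>Y. pair_sim R x y \<longrightarrow> pair_sim R y x" by (simp add: pair_sim_sym)
  moreover have "\<forall>x\<in>Y. \<forall>y\<in>Y. \<forall>z\<in>Y. pair_sim R x y \<longrightarrow> pair_sim R y z \<longrightarrow> pair_sim R x z"
    using pair_sim_trans[OF sig] Y by blast
  ultimately obtain X where "X \<subseteq> Y" "\<forall>x\<in>Y. \<exists>y\<in>X. pair_sim R x y"
    "\<forall>x\<in>X. \<forall>y\<in>X. pair_sim R x y \<longrightarrow> x = y"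
    using ex_representatives[of Y "pair_sim R"] by blast
  then show ?thesis using that unfolding reduced_def covered_def by blast
qed

text \<open>The teams covered by a member of H form the least class containing H that is closed
  under subteams and under similar teams.\<close>

definition defines_closure ::
    "'v set \<Rightarrow> ('v \<Rightarrow> 'a set) \<Rightarrow> ('v, 'a) gteam set \<Rightarrow> ('v, 'a) fm \<Rightarrow> bool" where
  "defines_closure D R H \<phi> \<longleftrightarrow>
     (\<forall>Y\<subseteq>compat_pairs D R. sat_g D Y \<phi> \<longleftrightarrow> (\<exists>T\<in>H. covered R Y T))"

lemma ex_COsq_defines_closure:
  assumes sig: "sig_ok D R" and H: "H \<subseteq> Pow (compat_pairs D R)" "H \<noteq> {}"
  shows "\<exists>\<phi>. is_COsq \<phi> \<and> wf_fm D R \<phi> \<and> defines_closure D R H \<phi>"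
proof -
  have finH: "finite H" using H(1) finite_compat_pairs[OF sig] by (meson finite_Pow_iff finite_subset)
  have T: "T \<subseteq> const_compat_pairs D R" "finite T" if "T \<in> H" for T
    using that H(1) compat_pairs_subset finite_compat_pairs[OF sig] finite_subset by blast+
  define \<phi> where "\<phi> = GDisjs D R (map (cover_fm D R) (list_of H))"
  have "is_COsq \<phi>"
    unfolding \<phi>_def by (intro is_COsq_GDisjs) (simp add: is_CO_imp[OF is_CO_cover_fm])
  moreover have "wf_fm D R \<phi>"
    unfolding \<phi>_def using wf_fm_cover_fm[OF sig T] set_list_of[OF finH]
    by (auto intro!: wf_fm_GDisjs[OF sig])
  moreover have "defines_closure D R H \<phi>"
    unfolding defines_closure_def
  proof (intro allI impI)
    fix Y assume "Y \<subseteq> compat_pairs D R"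
    then have Y: "Y \<subseteq> const_compat_pairs D R" using compat_pairs_subset by blast
    have "sat_g D Y \<phi> \<longleftrightarrow> Y = {} \<or> (\<exists>T\<in>H. sat_g D Y (cover_fm D R T))"
      unfolding \<phi>_def sat_g_GDisjs set_map set_list_of[OF finH] by (simp del: sat_g.simps)
    also have "\<dots> \<longleftrightarrow> (\<exists>T\<in>H. covered R Y T)"
      using sat_g_cover_fm[OF sig Y T] H(2) unfolding covered_def by auto
    finally show "sat_g D Y \<phi> \<longleftrightarrow> (\<exists>T\<in>H. covered R Y T)" .
  qed
  ultimately show ?thesis by blast
qed

lemma ex_covered_iff_reduced:
  assumes sig: "sig_ok D R" and H: "H \<subseteq> Pow (compat_pairs D R)" and Y: "Y \<subseteq> compat_pairs D R"
  shows "(\<exists>T\<in>H. covered R Y T) \<longleftrightarrow>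
    (\<forall>X\<subseteq>compat_pairs D R. reduced R X \<and> \<not> (\<exists>T\<in>H. covered R X T) \<longrightarrow> \<not> covered R X Y)"
proof -
  have ccp: "A \<subseteq> const_compat_pairs D R" if "A \<subseteq> compat_pairs D R" for A
    using that compat_pairs_subset by blast
  have HT: "T \<subseteq> const_compat_pairs D R" if "T \<in> H" for T using that H ccp by blast
  show ?thesis
  proof
    assume "\<exists>T\<in>H. covered R Y T"
    then obtain T where T: "T \<in> H" "covered R Y T" by blast
    show "\<forall>X\<subseteq>compat_pairs D R. reduced R X \<and> \<not> (\<exists>T\<in>H. covered R X T) \<longrightarrow> \<not> covered R X Y"
      using covered_trans[OF sig _ ccp[OF Y] HT[OF T(1)] _ T(2)] T(1) ccp by blast
  next
    assume no_bad: "\<forall>X\<subseteq>compat_pairs D R. reduced R X \<and> \<not> (\<exists>T\<in>H. covered R X T) \<longrightarrow> \<not> covered R X Y"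
    obtain X where X: "X \<subseteq> Y" "reduced R X" "covered R Y X"
      using ex_reduced_cover[OF sig ccp[OF Y]] by blast
    then obtain T where "T \<in> H" "covered R X T"
      using no_bad covered_subset[OF X(1)] Y by blast
    then show "\<exists>T\<in>H. covered R Y T"
      using covered_trans[OF sig ccp[OF Y] _ HT X(3)] X(1) Y ccp by blast
  qed
qed

lemma ex_COD_defines_closure:
  assumes sig: "sig_ok D R" and H: "H \<subseteq> Pow (compat_pairs D R)" "H \<noteq> {}"
  shows "\<exists>\<phi>. is_COD \<phi> \<and> wf_fm D R \<phi> \<and> defines_closure D R H \<phi>"
proof -
  define Bad where "Bad = {X. X \<subseteq> compat_pairs D R \<and> reduced R X \<and> \<not> (\<exists>T\<in>H. covered R X T)}"
  have finBad: "finite Bad" unfolding Bad_def using finite_compat_pairs[OF sig] by simp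
  have Bad_ne: "X \<noteq> {}" if "X \<in> Bad" for X
    using that H(2) unfolding Bad_def covered_def by blast
  define \<phi> where "\<phi> = Conjs D R (map (uncovered_fm D R) (list_of Bad))"
  have "is_COD \<phi>"
    unfolding \<phi>_def using is_COD_uncovered_fm by (auto intro!: is_COD_Conjs)
  moreover have "wf_fm D R \<phi>"
    unfolding \<phi>_def using wf_fm_uncovered_fm[OF sig] by (auto intro!: wf_fm_Conjs[OF sig])
  moreover have "defines_closure D R H \<phi>"
    unfolding defines_closure_def
  proof (intro allI impI)
    fix Y assume Y: "Y \<subseteq> compat_pairs D R"
    have "sat_g D Y \<phi> \<longleftrightarrow> (\<forall>X\<in>Bad. \<not> covered R X Y)"
      unfolding \<phi>_def sat_g_Conjs set_map set_list_of[OF finBad]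
      using sat_g_uncovered_fm[OF sig Y] Bad_ne unfolding Bad_def by auto
    also have "\<dots> \<longleftrightarrow> (\<exists>T\<in>H. covered R Y T)"
      unfolding ex_covered_iff_reduced[OF sig H(1) Y] Bad_def by blast
    finally show "sat_g D Y \<phi> \<longleftrightarrow> (\<exists>T\<in>H. covered R Y T)" .
  qed
  ultimately show ?thesis by blast
qed

lemma gsub_image_mono:
  assumes sig: "sig_ok D R" and F: "F \<in> systems D R"
    and ST: "S \<subseteq> compat_pairs D R" "T \<subseteq> compat_pairs D R" and cov: "covered R S T"
  shows "fst ` gsub R F S \<subseteq> fst ` gsub R F T"
proof
  fix s assume "s \<in> fst ` gsub R F S"
  then obtain G where G: "(s, G) \<in> S" "sys_sim R G F" unfolding gsub_def by auto
  then obtain q where q: "q \<in> T" "pair_sim R (s, G) q" using cov unfolding covered_def by blast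
  then obtain G' where qe: "q = (s, G')" and GG': "sys_sim R G G'"
    unfolding pair_sim_def by (metis fst_conv prod.collapse snd_conv)
  have "G \<in> systems D R" "G' \<in> systems D R"
    using G(1) q(1) qe ST unfolding compat_pairs_def by auto
  then have "sys_sim R G' F" using sys_sim_trans[OF sig _ _ F sys_sim_sym[OF GG'] G(2)] by blast
  then show "s \<in> fst ` gsub R F T" using q(1) qe unfolding gsub_def by force
qed

lemma g_equiv_iff_team_sim:
  assumes sig: "sig_ok D R" and ST: "S \<subseteq> compat_pairs D R" "T \<subseteq> compat_pairs D R"
  shows "g_equiv D R S T \<longleftrightarrow> team_sim R S T"
proof
  assume equiv: "g_equiv D R S T"
  have "covered R A B" if A: "A \<subseteq> compat_pairs D R"
    and AB: "\<forall>G\<in>systems D R. fst ` gsub R G A \<subseteq> fst ` gsub R G B" for A B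
    unfolding covered_def
  proof
    fix p assume p: "p \<in> A"
    obtain s G where pe: "p = (s, G)" by fastforce
    then have "G \<in> systems D R" using p A unfolding compat_pairs_def by blast
    moreover have "s \<in> fst ` gsub R G A" using p pe sys_sim_refl unfolding gsub_def by force
    ultimately have "s \<in> fst ` gsub R G B" using AB by blast
    then obtain G' where "(s, G') \<in> B" "sys_sim R G' G" unfolding gsub_def by auto
    then show "\<exists>q\<in>B. pair_sim R p q" using pe sys_sim_sym unfolding pair_sim_def by force
  qed
  then show "team_sim R S T" using equiv ST unfolding g_equiv_def team_sim_def by blast
next
  assume "team_sim R S T"
  then show "g_equiv D R S T"
    using gsub_image_mono[OF sig] ST unfolding g_equiv_def team_sim_def by blast
qed

lemma gen_class_iff_covered:
  assumes sig: "sig_ok D R" and K: "K \<subseteq> gen_teams D R" and down: "g_down_closed K"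
    and equiv: "g_equiv_closed D R K" and Y: "Y \<in> gen_teams D R"
  shows "Y \<in> K \<longleftrightarrow> (\<exists>T\<in>K. covered R Y T)"
proof
  assume "\<exists>T\<in>K. covered R Y T"
  then obtain T where T: "T \<in> K" "covered R Y T" by blast
  let ?T' = "{p\<in>T. \<exists>q\<in>Y. pair_sim R q p}"
  have "?T' \<subseteq> T" by blast
  then have "?T' \<in> K" using down T(1) unfolding g_down_closed_def by blast
  moreover have "?T' \<subseteq> compat_pairs D R" "Y \<subseteq> compat_pairs D R"
    using T(1) K Y unfolding gen_teams_def by blast+
  then have "g_equiv D R ?T' Y"
    using team_sim_sym[OF team_sim_restrict[OF T(2)]] by (simp add: g_equiv_iff_team_sim[OF sig])
  ultimately show "Y \<in> K" using equiv Y unfolding g_equiv_closed_def by blast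
next
  assume "Y \<in> K"
  then show "\<exists>T\<in>K. covered R Y T" using covered_refl by blast
qed

lemma pairs_of_subset: "T \<in> causal_teams D R \<Longrightarrow> pairs_of T \<subseteq> compat_pairs D R"
  unfolding causal_teams_def compat_pairs_def pairs_of_def by auto

lemma covered_pairs_of_iff:
  "covered R (pairs_of Y) (pairs_of T) \<longleftrightarrow>
    fst Y \<subseteq> fst T \<and> (fst Y \<noteq> {} \<longrightarrow> sys_sim R (snd Y) (snd T))"
  unfolding covered_def pairs_of_def pair_sim_def by auto

lemma empty_team_in_class:
  assumes "K \<noteq> {}" "c_down_closed K"
  shows "({}, empty_sys) \<in> K"
proof -
  obtain T where "T \<in> K" using assms(1) by blast
  moreover have "causal_subteam ({}, empty_sys) T" unfolding causal_subteam_def ct_norm_def by auto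
  ultimately show ?thesis using assms(2) unfolding c_down_closed_def by blast
qed

lemma causal_class_iff_covered:
  assumes K: "K \<subseteq> causal_teams D R" "K \<noteq> {}" and down: "c_down_closed K"
    and equiv: "c_equiv_closed D R K" and Y: "Y \<in> causal_teams D R"
  shows "Y \<in> K \<longleftrightarrow> (\<exists>T\<in>K. covered R (pairs_of Y) (pairs_of T))"
proof
  assume "\<exists>T\<in>K. covered R (pairs_of Y) (pairs_of T)"
  then obtain T where T: "T \<in> K" "fst Y \<subseteq> fst T" "fst Y \<noteq> {} \<longrightarrow> sys_sim R (snd Y) (snd T)"
    unfolding covered_pairs_of_iff by blast
  show "Y \<in> K"
  proof (cases "fst Y = {}")
    case True
    then have "Y = ({}, empty_sys)" using Y unfolding causal_teams_def by auto
    then show ?thesis using empty_team_in_class[OF K(2) down] by simp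
  next
    case False
    have "causal_subteam (fst Y, snd T) T"
      unfolding causal_subteam_def ct_norm_def using T(2) False by auto
    then have "(fst Y, snd T) \<in> K" using down T(1) unfolding c_down_closed_def by blast
    moreover have "ct_equiv R (fst Y, snd T) Y"
      unfolding ct_equiv_def using False T(3) sys_sim_sym by simp
    ultimately show ?thesis using equiv Y unfolding c_equiv_closed_def by blast
  qed
next
  assume "Y \<in> K"
  then show "\<exists>T\<in>K. covered R (pairs_of Y) (pairs_of T)" using covered_refl by blast
qed

lemma gen_class_closed_if_definable:
  assumes sig: "sig_ok D R" and \<phi>: "wf_fm D R \<phi>" and K: "K = {T \<in> gen_teams D R. sat_g D T \<phi>}"
  shows "g_down_closed K \<and> g_equiv_closed D R K"
proof
  show "g_down_closed K"
    unfolding g_down_closed_def K gen_teams_def using sat_g_subset by blast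
  show "g_equiv_closed D R K"
    unfolding g_equiv_closed_def
  proof (intro ballI impI)
    fix T S assume T: "T \<in> K" and S: "S \<in> gen_teams D R" and equiv: "g_equiv D R T S"
    have TS: "T \<subseteq> compat_pairs D R" "S \<subseteq> compat_pairs D R"
      using T S K unfolding gen_teams_def by auto
    then have "team_sim R T S" using equiv g_equiv_iff_team_sim[OF sig] by blast
    moreover have "T \<subseteq> const_compat_pairs D R" "S \<subseteq> const_compat_pairs D R"
      using TS compat_pairs_subset by blast+
    moreover have "sat_g D T \<phi>" using T K by blast
    ultimately have "sat_g D S \<phi>" using sat_g_team_sim[OF sig \<phi>] by blast
    then show "S \<in> K" using S K by blast
  qed
qed

lemma causal_subteamD:
  assumes sub: "causal_subteam S T" and T: "T \<in> causal_teams D R"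
  shows "S \<in> causal_teams D R" "pairs_of S \<subseteq> pairs_of T"
proof -
  obtain A where A: "A \<subseteq> fst T" "S = ct_norm (A, snd T)" using sub unfolding causal_subteam_def by blast
  have "S \<in> causal_teams D R \<and> pairs_of S \<subseteq> pairs_of T"
  proof (cases "A = {}")
    case True
    then have "S = ({}, empty_sys)" using A(2) unfolding ct_norm_def by simp
    then show ?thesis
      unfolding causal_teams_def empty_sys_def systems_def parent_graph_def pairs_of_def
      by (simp add: acyclic_def)
  next
    case False
    then have S: "S = (A, snd T)" using A(2) unfolding ct_norm_def by simp
    have "S \<in> causal_teams D R"
      using T A(1) False unfolding S causal_teams_def by (cases T) auto
    moreover have "pairs_of S \<subseteq> pairs_of T" unfolding S pairs_of_def using A(1) by auto
    ultimately show ?thesis by blast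
  qed
  then show "S \<in> causal_teams D R" "pairs_of S \<subseteq> pairs_of T" by blast+
qed

lemma causal_class_closed_if_definable:
  assumes sig: "sig_ok D R" and \<phi>: "wf_fm D R \<phi>" and K: "K = {T \<in> causal_teams D R. sat_c D T \<phi>}"
  shows "c_down_closed K \<and> c_equiv_closed D R K"
proof
  show "c_down_closed K"
    unfolding c_down_closed_def
  proof (intro ballI allI impI)
    fix T S assume T: "T \<in> K" and "causal_subteam S T"
    then have "S \<in> causal_teams D R" "pairs_of S \<subseteq> pairs_of T"
      using causal_subteamD unfolding K by blast+
    then show "S \<in> K" using T sat_g_subset unfolding K sat_c_eq_sat_g_pairs_of by blast
  qed
  show "c_equiv_closed D R K"
    unfolding c_equiv_closed_def
  proof (intro ballI impI)
    fix T S assume T: "T \<in> K" and S: "S \<in> causal_teams D R" and equiv: "ct_equiv R T S"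
    have "fst T = fst S" "sys_sim R (snd T) (snd S)" "sys_sim R (snd S) (snd T)"
      using equiv sys_sim_sym unfolding ct_equiv_def by auto
    then have "team_sim R (pairs_of T) (pairs_of S)"
      unfolding team_sim_def covered_pairs_of_iff by simp
    moreover have "pairs_of T \<subseteq> const_compat_pairs D R" "pairs_of S \<subseteq> const_compat_pairs D R"
      using T S pairs_of_subset compat_pairs_subset unfolding K by blast+
    moreover have "sat_g D (pairs_of T) \<phi>" using T unfolding K sat_c_eq_sat_g_pairs_of by blast
    ultimately have "sat_g D (pairs_of S) \<phi>" using sat_g_team_sim[OF sig \<phi>] by blast
    then show "S \<in> K" using S unfolding K sat_c_eq_sat_g_pairs_of by blast
  qed
qed

lemma gen_closed_iff_definable:
  assumes sig: "sig_ok D R" and K: "K \<subseteq> gen_teams D R" "K \<noteq> {}"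
    and L: "\<And>H. H \<subseteq> Pow (compat_pairs D R) \<Longrightarrow> H \<noteq> {} \<Longrightarrow>
      \<exists>\<phi>. L \<phi> \<and> wf_fm D R \<phi> \<and> defines_closure D R H \<phi>"
  shows "(g_down_closed K \<and> g_equiv_closed D R K) \<longleftrightarrow>
    (\<exists>\<phi>. L \<phi> \<and> wf_fm D R \<phi> \<and> K = {T \<in> gen_teams D R. sat_g D T \<phi>})"
proof
  assume closed: "g_down_closed K \<and> g_equiv_closed D R K"
  have "K \<subseteq> Pow (compat_pairs D R)" using K(1) unfolding gen_teams_def .
  then obtain \<phi> where \<phi>: "L \<phi>" "wf_fm D R \<phi>" "defines_closure D R K \<phi>"
    using L[OF _ K(2)] by blast
  have "Y \<in> K \<longleftrightarrow> sat_g D Y \<phi>" if Y: "Y \<in> gen_teams D R" for Y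
  proof -
    have "Y \<in> K \<longleftrightarrow> (\<exists>T\<in>K. covered R Y T)"
      using gen_class_iff_covered[OF sig K(1) _ _ Y] closed by blast
    also have "\<dots> \<longleftrightarrow> sat_g D Y \<phi>"
      using \<phi>(3) Y unfolding defines_closure_def gen_teams_def by blast
    finally show ?thesis .
  qed
  then have "K = {T \<in> gen_teams D R. sat_g D T \<phi>}" using K(1) by blast
  then show "\<exists>\<phi>. L \<phi> \<and> wf_fm D R \<phi> \<and> K = {T \<in> gen_teams D R. sat_g D T \<phi>}"
    using \<phi>(1,2) by blast
next
  assume "\<exists>\<phi>. L \<phi> \<and> wf_fm D R \<phi> \<and> K = {T \<in> gen_teams D R. sat_g D T \<phi>}"
  then obtain \<phi> where "wf_fm D R \<phi>" "K = {T \<in> gen_teams D R. sat_g D T \<phi>}" by blast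
  then show "g_down_closed K \<and> g_equiv_closed D R K" by (rule gen_class_closed_if_definable[OF sig])
qed

lemma causal_closed_iff_definable:
  assumes sig: "sig_ok D R" and K: "K \<subseteq> causal_teams D R" "K \<noteq> {}"
    and L: "\<And>H. H \<subseteq> Pow (compat_pairs D R) \<Longrightarrow> H \<noteq> {} \<Longrightarrow>
      \<exists>\<phi>. L \<phi> \<and> wf_fm D R \<phi> \<and> defines_closure D R H \<phi>"
  shows "(c_down_closed K \<and> c_equiv_closed D R K) \<longleftrightarrow>
    (\<exists>\<phi>. L \<phi> \<and> wf_fm D R \<phi> \<and> K = {T \<in> causal_teams D R. sat_c D T \<phi>})"
proof
  assume closed: "c_down_closed K \<and> c_equiv_closed D R K"
  have "pairs_of ` K \<subseteq> Pow (compat_pairs D R)" using K(1) pairs_of_subset by blast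
  moreover have "pairs_of ` K \<noteq> {}" using K(2) by simp
  ultimately obtain \<phi> where \<phi>: "L \<phi>" "wf_fm D R \<phi>" "defines_closure D R (pairs_of ` K) \<phi>"
    using L by blast
  have "Y \<in> K \<longleftrightarrow> sat_c D Y \<phi>" if Y: "Y \<in> causal_teams D R" for Y
  proof -
    have "Y \<in> K \<longleftrightarrow> (\<exists>T\<in>K. covered R (pairs_of Y) (pairs_of T))"
      using causal_class_iff_covered[OF K _ _ Y] closed by blast
    also have "\<dots> \<longleftrightarrow> sat_g D (pairs_of Y) \<phi>"
      using \<phi>(3) pairs_of_subset[OF Y] unfolding defines_closure_def by blast
    finally show ?thesis unfolding sat_c_eq_sat_g_pairs_of .
  qed
  then have "K = {T \<in> causal_teams D R. sat_c D T \<phi>}" using K(1) by blast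
  then show "\<exists>\<phi>. L \<phi> \<and> wf_fm D R \<phi> \<and> K = {T \<in> causal_teams D R. sat_c D T \<phi>}"
    using \<phi>(1,2) by blast
next
  assume "\<exists>\<phi>. L \<phi> \<and> wf_fm D R \<phi> \<and> K = {T \<in> causal_teams D R. sat_c D T \<phi>}"
  then obtain \<phi> where "wf_fm D R \<phi>" "K = {T \<in> causal_teams D R. sat_c D T \<phi>}" by blast
  then show "c_down_closed K \<and> c_equiv_closed D R K" by (rule causal_class_closed_if_definable[OF sig])
qed

theorem theorem5p1:
  fixes D :: "'v set" and R :: "'v \<Rightarrow> 'a set"
  assumes "sig_ok D R"
  shows "(\<forall>K. K \<subseteq> causal_teams D R \<and> K \<noteq> {} \<longrightarrow>
            ((c_down_closed K \<and> c_equiv_closed D R K) \<longleftrightarrow>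
               (\<exists>\<phi>. is_COsq \<phi> \<and> wf_fm D R \<phi> \<and> K = {T \<in> causal_teams D R. sat_c D T \<phi>}))
          \<and> ((c_down_closed K \<and> c_equiv_closed D R K) \<longleftrightarrow>
               (\<exists>\<phi>. is_COD \<phi> \<and> wf_fm D R \<phi> \<and> K = {T \<in> causal_teams D R. sat_c D T \<phi>})))
       \<and> (\<forall>K. K \<subseteq> gen_teams D R \<and> K \<noteq> {} \<longrightarrow>
            ((g_down_closed K \<and> g_equiv_closed D R K) \<longleftrightarrow>
               (\<exists>\<phi>. is_COsq \<phi> \<and> wf_fm D R \<phi> \<and> K = {T \<in> gen_teams D R. sat_g D T \<phi>}))
          \<and> ((g_down_closed K \<and> g_equiv_closed D R K) \<longleftrightarrow>
               (\<exists>\<phi>. is_COD \<phi> \<and> wf_fm D R \<phi> \<and> K = {T \<in> gen_teams D R. sat_g D T \<phi>})))"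
proof -
  note COsq = ex_COsq_defines_closure[OF assms] and COD = ex_COD_defines_closure[OF assms]
  show ?thesis
    by (intro conjI allI impI; elim conjE;
        rule causal_closed_iff_definable[OF assms _ _ COsq] causal_closed_iff_definable[OF assms _ _ COD]
          gen_closed_iff_definable[OF assms _ _ COsq] gen_closed_iff_definable[OF assms _ _ COD];
        assumption)
qed

end
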